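(* Fix $X\in\mathbb R^{n\times p}$ and $\mathbf y\in\mathbb R^n$ such that $X^{\top}X$ is invertible. Fix $\eta\in(0,1)$ and $\nu\in(0,1/e)$. Let $\widetilde{X^{\top}X}=X^{\top}X+N$ and $\widetilde{X^{\top}\mathbf y}=X^{\top}\mathbf y+\mathbf n$, where each entry of the $p\times p$ matrix $N$ and of the vector $\mathbf n\in\mathbb R^p$ is sampled i.i.d. from $\mathcal N(0,\sigma^2)$. Let $\hat{\boldsymbol\beta}=(X^{\top}X)^{-1}X^{\top}\mathbf y$ and $\tilde{\boldsymbol\beta}=(\widetilde{X^{\top}X})^{-1}\widetilde{X^{\top}\mathbf y}$. Then there exists a constant $C\ge1$ such that if $\sigma_{\min}(X^{\top}X)\ge\frac{2C}{\eta}\cdot\sigma\sqrt p\log(1/\nu)$, then with probability at least $1-\nu$, \[ \left\|\tilde{\boldsymbol\beta}-\hat{\boldsymbol\beta}\right\|\le2\eta\|\hat{\boldsymbol\beta}\|+\frac{\eta}{C}. \]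
   Context: $\sigma_{\min}(M)$ denotes the least singular value of $M$; $\|\cdot\|$ is the Euclidean norm. *)

theory Defs
  imports "HOL-Probability.Probability" "Jordan_Normal_Form.Gauss_Jordan_Elimination"
    "Jordan_Normal_Form.Char_Poly"
begin

definition vnorm :: "real vec \<Rightarrow> real" where
  "vnorm v = sqrt (\<Sum>i<dim_vec v. (v $ i)\<^sup>2)"

definition sigma_min :: "real mat \<Rightarrow> real" where
  "sigma_min M = sqrt (Min {k. eigenvalue (transpose_mat M * M) k})"

text \<open>Matrix inverse (convention: zero matrix if singular; irrelevant, probability 0).\<close>
definition minv :: "real mat \<Rightarrow> real mat" where
  "minv A = (case mat_inverse A of Some B \<Rightarrow> B | None \<Rightarrow> 0\<^sub>m (dim_row A) (dim_col A))"

text \<open>Gaussian N(0, sigma^2) on the reals (sigma = standard deviation).\<close>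
definition gauss :: "real \<Rightarrow> real measure" where
  "gauss \<sigma> = density lborel (normal_density 0 \<sigma>)"

definition noise_space :: "nat \<Rightarrow> real \<Rightarrow> ((nat \<times> nat \<Rightarrow> real) \<times> (nat \<Rightarrow> real)) measure" where
  "noise_space p \<sigma> = (PiM ({..<p} \<times> {..<p}) (\<lambda>_. gauss \<sigma>)) \<Otimes>\<^sub>M (PiM {..<p} (\<lambda>_. gauss \<sigma>))"

definition noise_mat :: "nat \<Rightarrow> (nat \<times> nat \<Rightarrow> real) \<times> (nat \<Rightarrow> real) \<Rightarrow> real mat" where
  "noise_mat p \<omega> = mat p p (\<lambda>ij. fst \<omega> ij)"

definition noise_vec :: "nat \<Rightarrow> (nat \<times> nat \<Rightarrow> real) \<times> (nat \<Rightarrow> real) \<Rightarrow> real vec" where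
  "noise_vec p \<omega> = vec p (\<lambda>i. snd \<omega> i)"

end

theory Submission
  imports Defs
begin

text \<open>Write \<open>A = X\<^sup>T X\<close>, \<open>b = X\<^sup>T y\<close> and \<open>\<beta> = A\<^sup>-\<^sup>1 b\<close>. Since \<open>(A + N) (\<beta>' - \<beta>) = n - N \<beta>\<close> for
  \<open>\<beta>' = (A + N)\<^sup>-\<^sup>1 (b + n)\<close>, and \<open>A + N\<close> is bounded below by \<open>\<sigma>\<^sub>m\<^sub>i\<^sub>n(A) - \<parallel>N\<parallel>\<close>, it suffices that
  \<open>\<parallel>N\<parallel>\<close> and \<open>\<parallel>n\<parallel>\<close> are \<open>O(\<sigma> \<surd>p log(1/\<nu>))\<close> with probability \<open>1 - \<nu>\<close>. For \<open>\<parallel>n\<parallel>\<close> this is a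
  \<open>\<chi>\<^sup>2\<close> tail bound. For \<open>\<parallel>N\<parallel>\<close>, each bilinear form \<open>z \<bullet> N w\<close> is Gaussian, and a union bound over
  an integer net of the unit ball with \<open>e\<^sup>O\<^sup>(\<^sup>p\<^sup>)\<close> points controls the supremum over all unit vectors.
  The gap assumption with \<open>C = 500\<close> then makes both perturbations small against \<open>\<sigma>\<^sub>m\<^sub>i\<^sub>n(A)\<close>.\<close>

lemma vnorm_eq_L2_set: "vnorm v = L2_set (\<lambda>i. v $ i) {..<dim_vec v}"
  unfolding vnorm_def L2_set_def by simp

lemma vnorm_nonneg: "vnorm v \<ge> 0"
  unfolding vnorm_def by (auto intro!: sum_nonneg)

lemma vnorm_zero_vec [simp]: "vnorm (0\<^sub>v n) = 0"
  unfolding vnorm_def by simp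

lemma vnorm_square_eq_sum: "(vnorm v)\<^sup>2 = (\<Sum>i<dim_vec v. (v $ i)\<^sup>2)"
  unfolding vnorm_def by (simp add: sum_nonneg)

lemma scalar_prod_eq_sum: "dim_vec u = dim_vec v \<Longrightarrow> u \<bullet> v = (\<Sum>i<dim_vec v. u $ i * v $ i)"
  unfolding scalar_prod_def by (simp add: atLeast0LessThan)

lemma vnorm_square: "(vnorm v)\<^sup>2 = v \<bullet> v"
  unfolding vnorm_square_eq_sum by (simp add: scalar_prod_eq_sum power2_eq_square)

lemma abs_scalar_prod_le_vnorm:
  assumes "dim_vec u = dim_vec v" shows "\<bar>u \<bullet> v\<bar> \<le> vnorm u * vnorm v"
proof -
  have "\<bar>u \<bullet> v\<bar> \<le> (\<Sum>i<dim_vec v. \<bar>u $ i\<bar> * \<bar>v $ i\<bar>)"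
    unfolding scalar_prod_eq_sum[OF assms] by (rule order.trans[OF sum_abs], simp add: abs_mult)
  also have "\<dots> \<le> vnorm u * vnorm v"
    unfolding vnorm_eq_L2_set assms by (rule L2_set_mult_ineq)
  finally show ?thesis .
qed

lemma vnorm_add_le:
  assumes "dim_vec u = dim_vec v" shows "vnorm (u + v) \<le> vnorm u + vnorm v"
proof -
  have "vnorm (u + v) = L2_set (\<lambda>i. u $ i + v $ i) {..<dim_vec v}"
    unfolding vnorm_eq_L2_set using assms by (auto intro!: L2_set_cong)
  also have "\<dots> \<le> vnorm u + vnorm v"
    unfolding vnorm_eq_L2_set assms by (rule L2_set_triangle_ineq)
  finally show ?thesis .
qed

lemma vnorm_smult: "vnorm (a \<cdot>\<^sub>v v) = \<bar>a\<bar> * vnorm v"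
proof -
  have "vnorm (a \<cdot>\<^sub>v v) = sqrt (a\<^sup>2 * (\<Sum>i<dim_vec v. (v $ i)\<^sup>2))"
    unfolding vnorm_def by (simp add: sum_distrib_left power_mult_distrib)
  then show ?thesis unfolding vnorm_def by (simp add: real_sqrt_mult)
qed

lemma vnorm_diff_le:
  assumes "dim_vec u = dim_vec v" shows "vnorm (u - v) \<le> vnorm u + vnorm v"
proof -
  have "u - v = u + (- 1) \<cdot>\<^sub>v v" using assms by (auto simp: vec_eq_iff)
  then show ?thesis using vnorm_add_le[of u "(- 1) \<cdot>\<^sub>v v"] assms by (simp add: vnorm_smult)
qed

lemma vnorm_add_ge:
  assumes "dim_vec u = dim_vec v" shows "vnorm u - vnorm v \<le> vnorm (u + v)"
proof -
  have "u = (u + v) - v" using assms by (auto simp: vec_eq_iff)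
  then show ?thesis using vnorm_diff_le[of "u + v" v] assms by simp
qed

lemma vnorm_eq_0_iff: "vnorm v = 0 \<longleftrightarrow> v = 0\<^sub>v (dim_vec v)"
  unfolding vnorm_eq_L2_set L2_set_eq_0_iff[OF finite_lessThan] by (auto simp: vec_eq_iff)

lemma vnorm_diff_smult_square:
  assumes "dim_vec a = dim_vec b"
  shows "(vnorm (a - t \<cdot>\<^sub>v b))\<^sup>2 = (vnorm a)\<^sup>2 - 2 * t * (a \<bullet> b) + t\<^sup>2 * (vnorm b)\<^sup>2"
proof -
  have "(vnorm (a - t \<cdot>\<^sub>v b))\<^sup>2 = (\<Sum>i<dim_vec b. (a $ i)\<^sup>2 - 2 * t * (a $ i * b $ i) + t\<^sup>2 * (b $ i)\<^sup>2)"
    unfolding vnorm_square_eq_sum using assms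
    by (intro sum.cong) (auto simp: power2_eq_square algebra_simps)
  also have "\<dots> = (vnorm a)\<^sup>2 - 2 * t * (a \<bullet> b) + t\<^sup>2 * (vnorm b)\<^sup>2"
    unfolding vnorm_square using assms
    by (simp add: scalar_prod_eq_sum sum.distrib sum_subtractf sum_distrib_left power2_eq_square)
  finally show ?thesis .
qed

definition frob_norm :: "real mat \<Rightarrow> real" where
  "frob_norm M = sqrt (\<Sum>i<dim_row M. \<Sum>j<dim_col M. (M $$ (i,j))\<^sup>2)"

lemma frob_norm_nonneg: "frob_norm M \<ge> 0"
  unfolding frob_norm_def by (auto intro!: sum_nonneg)

lemma vnorm_mult_mat_vec_le_frob_norm:
  assumes "dim_vec v = dim_col M" shows "vnorm (M *\<^sub>v v) \<le> frob_norm M * vnorm v"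
proof -
  have "(vnorm (M *\<^sub>v v))\<^sup>2 = (\<Sum>i<dim_row M. ((M *\<^sub>v v) $ i)\<^sup>2)"
    by (simp add: vnorm_square_eq_sum)
  also have "\<dots> \<le> (\<Sum>i<dim_row M. (vnorm (row M i) * vnorm v)\<^sup>2)"
  proof (rule sum_mono)
    fix i assume "i \<in> {..<dim_row M}"
    then have "\<bar>(M *\<^sub>v v) $ i\<bar> \<le> vnorm (row M i) * vnorm v"
      using assms abs_scalar_prod_le_vnorm[of "row M i" v] by simp
    then show "((M *\<^sub>v v) $ i)\<^sup>2 \<le> (vnorm (row M i) * vnorm v)\<^sup>2"
      by (metis abs_ge_zero power2_abs power_mono)
  qed
  also have "\<dots> = (frob_norm M * vnorm v)\<^sup>2"
    unfolding frob_norm_def power_mult_distrib sum_distrib_right[symmetric]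
    by (simp add: vnorm_square_eq_sum sum_nonneg)
  finally show ?thesis
    using power2_le_imp_le frob_norm_nonneg vnorm_nonneg by (metis mult_nonneg_nonneg)
qed

section \<open>The least singular value\<close>

definition rayleigh_min :: "real mat \<Rightarrow> real" where
  "rayleigh_min A = Inf {(vnorm (A *\<^sub>v x))\<^sup>2 | x. x \<in> carrier_vec (dim_col A) \<and> vnorm x = 1}"

lemma vnorm_unit_vec: "i < n \<Longrightarrow> vnorm (unit_vec n i :: real vec) = 1"
proof -
  assume i: "i < n"
  have "(\<Sum>j<n. ((unit_vec n i :: real vec) $ j)\<^sup>2) = (\<Sum>j<n. if j = i then 1 else 0)"
    by (rule sum.cong) (auto simp: unit_vec_def)
  then show ?thesis using i unfolding vnorm_def by simp
qed

context
  fixes A :: "real mat" and m p :: nat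
  assumes A: "A \<in> carrier_mat m p" and p: "0 < p"
begin

private abbreviation "rayleigh_values \<equiv> {(vnorm (A *\<^sub>v x))\<^sup>2 | x. x \<in> carrier_vec p \<and> vnorm x = 1}"

private lemma rayleigh_min_alt: "rayleigh_min A = Inf rayleigh_values"
  using A unfolding rayleigh_min_def by simp

private lemma rayleigh_values_nonempty: "rayleigh_values \<noteq> {}"
  using vnorm_unit_vec[OF p] by (auto intro!: exI[of _ "unit_vec p 0"])

private lemma rayleigh_values_bdd: "bdd_below rayleigh_values"
  by (auto intro!: bdd_belowI[of _ 0])

lemma rayleigh_min_nonneg: "rayleigh_min A \<ge> 0"
  unfolding rayleigh_min_alt using rayleigh_values_nonempty by (auto intro!: cInf_greatest)

lemma rayleigh_min_mult_le:
  assumes x: "x \<in> carrier_vec p"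
  shows "rayleigh_min A * (vnorm x)\<^sup>2 \<le> (vnorm (A *\<^sub>v x))\<^sup>2"
proof (cases "vnorm x = 0")
  case False
  then have nx: "vnorm x > 0" using vnorm_nonneg[of x] by simp
  let ?y = "(1 / vnorm x) \<cdot>\<^sub>v x"
  have "rayleigh_min A \<le> (vnorm (A *\<^sub>v ?y))\<^sup>2"
    unfolding rayleigh_min_alt using x nx rayleigh_values_bdd
    by (intro cInf_lower) (auto simp: vnorm_smult)
  also have "\<dots> = (vnorm (A *\<^sub>v x))\<^sup>2 / (vnorm x)\<^sup>2"
    using A x nx by (simp add: mult_mat_vec vnorm_smult power_divide)
  finally show ?thesis using nx by (simp add: field_simps)
qed simp

lemma rayleigh_min_approx:
  assumes "0 < \<delta>"
  obtains x where "x \<in> carrier_vec p" "vnorm x = 1" "(vnorm (A *\<^sub>v x))\<^sup>2 < rayleigh_min A + \<delta>"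
proof -
  have "\<exists>v \<in> rayleigh_values. v < rayleigh_min A + \<delta>"
    unfolding rayleigh_min_alt
    using cInf_less_iff[OF rayleigh_values_nonempty rayleigh_values_bdd, of "Inf rayleigh_values + \<delta>"]
      assms by simp
  then show ?thesis using that by auto
qed

end

text \<open>If \<open>\<mu>\<close> bounds the Rayleigh quotient of \<open>A\<close> from below, then the residual
  \<open>(A\<^sup>T A - \<mu>) x\<close> is controlled by the excess \<open>\<parallel>A x\<parallel>\<^sup>2 - \<mu> \<parallel>x\<parallel>\<^sup>2\<close>: expand the
  nonnegative excess at \<open>x - t w\<close>, \<open>w\<close> the residual, and optimise in \<open>t\<close>.\<close>

lemma gram_residual_square_le:
  fixes A :: "real mat"
  assumes A: "A \<in> carrier_mat m p" and \<mu>: "0 \<le> \<mu>"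
    and lower: "\<And>x. x \<in> carrier_vec p \<Longrightarrow> \<mu> * (vnorm x)\<^sup>2 \<le> (vnorm (A *\<^sub>v x))\<^sup>2"
    and x: "x \<in> carrier_vec p"
  defines "w \<equiv> transpose_mat A *\<^sub>v (A *\<^sub>v x) - \<mu> \<cdot>\<^sub>v x"
  shows "(vnorm w)\<^sup>2 \<le> ((frob_norm A)\<^sup>2 + 1) * ((vnorm (A *\<^sub>v x))\<^sup>2 - \<mu> * (vnorm x)\<^sup>2)"
proof -
  let ?F = "(frob_norm A)\<^sup>2 + 1"
  let ?excess = "\<lambda>v. (vnorm (A *\<^sub>v v))\<^sup>2 - \<mu> * (vnorm v)\<^sup>2"
  define t where "t = 1 / ?F"
  have F: "?F > 0" by (simp add: add_nonneg_pos)
  have w: "w \<in> carrier_vec p" unfolding w_def using A x by simp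
  have Ax: "A *\<^sub>v x \<in> carrier_vec m" "A *\<^sub>v w \<in> carrier_vec m" using A x w by auto
  have dot: "(A *\<^sub>v x) \<bullet> (A *\<^sub>v w) - \<mu> * (x \<bullet> w) = w \<bullet> w"
    using transpose_vec_mult_scalar[OF A w Ax(1)] A x w
    by (simp add: w_def minus_scalar_prod_distrib[of _ p])
  have excess_w: "?excess w \<le> ?F * (vnorm w)\<^sup>2"
  proof -
    have "vnorm (A *\<^sub>v w) \<le> frob_norm A * vnorm w"
      using A w by (intro vnorm_mult_mat_vec_le_frob_norm) auto
    then have "(vnorm (A *\<^sub>v w))\<^sup>2 \<le> (frob_norm A * vnorm w)\<^sup>2"
      by (intro power_mono vnorm_nonneg)
    then show ?thesis using \<mu> by (simp add: power_mult_distrib algebra_simps add_increasing)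
  qed
  have "A *\<^sub>v (x - t \<cdot>\<^sub>v w) = A *\<^sub>v x - t \<cdot>\<^sub>v (A *\<^sub>v w)"
    using A x w by (simp add: mult_minus_distrib_mat_vec mult_mat_vec)
  then have "0 \<le> ?excess x - 2 * t * ((A *\<^sub>v x) \<bullet> (A *\<^sub>v w) - \<mu> * (x \<bullet> w)) + t\<^sup>2 * ?excess w"
    using lower[of "x - t \<cdot>\<^sub>v w"] x w Ax by (simp add: vnorm_diff_smult_square algebra_simps)
  also have "\<dots> \<le> ?excess x - 2 * t * (vnorm w)\<^sup>2 + t\<^sup>2 * (?F * (vnorm w)\<^sup>2)"
    using excess_w by (simp add: dot vnorm_square[symmetric] mult_left_mono)
  also have "\<dots> = ?excess x - t * (vnorm w)\<^sup>2"
    using F by (simp add: t_def power2_eq_square)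
  finally have "t * (vnorm w)\<^sup>2 \<le> ?excess x" by simp
  then show ?thesis using F by (simp add: t_def field_simps)
qed

text \<open>Otherwise \<open>A\<^sup>T A - \<mu>\<close> would have an inverse \<open>D\<close>, and \<open>\<parallel>x\<parallel> \<le> \<parallel>D\<parallel> \<parallel>(A\<^sup>T A - \<mu>) x\<parallel>\<close> contradicts
  the previous lemma for unit vectors \<open>x\<close> that nearly attain \<open>\<mu>\<close>.\<close>

lemma eigenvalue_rayleigh_min:
  fixes A :: "real mat"
  assumes A: "A \<in> carrier_mat m p" and p: "0 < p"
  shows "eigenvalue (transpose_mat A * A) (rayleigh_min A)"
proof (rule ccontr)
  let ?\<mu> = "rayleigh_min A"
  let ?B = "transpose_mat A * A"
  let ?C = "char_matrix ?B ?\<mu>"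
  have B: "?B \<in> carrier_mat p p" and C: "?C \<in> carrier_mat p p" using A by auto
  have Cx: "?C *\<^sub>v x = transpose_mat A *\<^sub>v (A *\<^sub>v x) - ?\<mu> \<cdot>\<^sub>v x" if x: "x \<in> carrier_vec p" for x
    using A x unfolding char_matrix_def
    by (auto simp: vec_eq_iff add_mult_distrib_mat_vec[of _ p p] assoc_mult_mat_vec[of _ p m]
        scalar_prod_left_unit row_smult row_one)
  assume "\<not> eigenvalue ?B ?\<mu>"
  then have "det ?C \<noteq> 0" using eigenvalue_det[OF B] by simp
  then obtain D where D: "D \<in> carrier_mat p p" "D * ?C = 1\<^sub>m p"
    using mat_inverse[OF C] by (metis det_non_zero_imp_unit[OF C] option.exhaust)
  define G where "G = (frob_norm D)\<^sup>2 * ((frob_norm A)\<^sup>2 + 1)"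
  have G: "G \<ge> 0" unfolding G_def by simp
  obtain x where x: "x \<in> carrier_vec p" "vnorm x = 1" "(vnorm (A *\<^sub>v x))\<^sup>2 < ?\<mu> + 1 / (G + 1)"
    using rayleigh_min_approx[OF A p, of "1 / (G + 1)"] G by auto
  have "x = D *\<^sub>v (?C *\<^sub>v x)" using D C x by (simp add: assoc_mult_mat_vec[symmetric])
  then have "1 \<le> frob_norm D * vnorm (?C *\<^sub>v x)"
    using vnorm_mult_mat_vec_le_frob_norm[of "?C *\<^sub>v x" D] D C x by simp
  then have "1 \<le> (frob_norm D)\<^sup>2 * (vnorm (?C *\<^sub>v x))\<^sup>2"
    by (metis one_le_power power_mult_distrib)
  also have "\<dots> \<le> (frob_norm D)\<^sup>2 * (((frob_norm A)\<^sup>2 + 1) * ((vnorm (A *\<^sub>v x))\<^sup>2 - ?\<mu> * (vnorm x)\<^sup>2))"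
    unfolding Cx[OF x(1)]
    by (intro mult_left_mono gram_residual_square_le[OF A rayleigh_min_nonneg[OF A p]]
        rayleigh_min_mult_le[OF A p] x(1)) auto
  also have "\<dots> \<le> (frob_norm D)\<^sup>2 * (((frob_norm A)\<^sup>2 + 1) * (1 / (G + 1)))"
    using x by (intro mult_left_mono) (auto simp: add_pos_nonneg)
  also have "\<dots> = G / (G + 1)" unfolding G_def by simp
  also have "\<dots> < 1" using G by simp
  finally show False by simp
qed

lemma sigma_min_mult_vnorm_le:
  fixes A :: "real mat"
  assumes A: "A \<in> carrier_mat m p" and p: "0 < p" and x: "x \<in> carrier_vec p"
  shows "sigma_min A * vnorm x \<le> vnorm (A *\<^sub>v x)"
proof -
  let ?B = "transpose_mat A * A"
  have B: "?B \<in> carrier_mat p p" using A by auto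
  have "{k. eigenvalue ?B k} \<subseteq> {k. poly (char_poly ?B) k = 0}"
    using eigenvalue_root_char_poly[OF B] by auto
  moreover have "char_poly ?B \<noteq> 0" using degree_monic_char_poly[OF B] by auto
  ultimately have "finite {k. eigenvalue ?B k}" using poly_roots_finite finite_subset by blast
  then have "sigma_min A \<le> sqrt (rayleigh_min A)"
    unfolding sigma_min_def using eigenvalue_rayleigh_min[OF A p] by (simp add: Min_le)
  moreover have "sqrt (rayleigh_min A) * vnorm x \<le> vnorm (A *\<^sub>v x)"
  proof -
    have "(sqrt (rayleigh_min A) * vnorm x)\<^sup>2 \<le> (vnorm (A *\<^sub>v x))\<^sup>2"
      using rayleigh_min_mult_le[OF A p x] rayleigh_min_nonneg[OF A p]
      by (simp add: power_mult_distrib)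
    then show ?thesis using vnorm_nonneg power2_le_imp_le by blast
  qed
  ultimately show ?thesis using vnorm_nonneg[of x] by (meson mult_right_mono order_trans)
qed

section \<open>Inverses of perturbed matrices\<close>

lemma minv_eq_adj_mat:
  fixes M :: "real mat"
  assumes M: "M \<in> carrier_mat p p"
  shows "minv M = (1 / det M) \<cdot>\<^sub>m adj_mat M"
proof (cases "det M = 0")
  case True
  have "mat_inverse M = None"
  proof (rule ccontr)
    assume "mat_inverse M \<noteq> None"
    then obtain B where "mat_inverse M = Some B" by auto
    with mat_inverse(2)[OF M] have "M * B = 1\<^sub>m p" "B \<in> carrier_mat p p" by auto
    then have "det M * det B = 1" using det_mult[OF M, of B] by simp
    then show False using True by simp
  qed
  then show ?thesis using M True adj_mat(1)[OF M] unfolding minv_def by (auto simp: eq_matI)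
next
  case False
  then have "M \<in> Units (ring_mat TYPE(real) p ())" by (rule det_non_zero_imp_unit[OF M])
  then obtain B where B: "mat_inverse M = Some B"
    using mat_inverse(1)[OF M, of "()"] by (cases "mat_inverse M") auto
  from mat_inverse(2)[OF M B] have BM: "B * M = 1\<^sub>m p" and Bc: "B \<in> carrier_mat p p" by auto
  have adj: "adj_mat M \<in> carrier_mat p p" "M * adj_mat M = det M \<cdot>\<^sub>m 1\<^sub>m p" using adj_mat[OF M] by auto
  have "adj_mat M = (B * M) * adj_mat M" using BM adj by simp
  also have "\<dots> = B * (M * adj_mat M)" using Bc M adj by (simp add: assoc_mult_mat)
  also have "\<dots> = det M \<cdot>\<^sub>m B" using adj Bc by (simp add: mult_smult_distrib[OF Bc one_carrier_mat])
  finally show ?thesis using B False unfolding minv_def by (auto simp: eq_matI)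
qed

lemma minv_carrier_mat: "(M :: real mat) \<in> carrier_mat p p \<Longrightarrow> minv M \<in> carrier_mat p p"
  using minv_eq_adj_mat[of M p] adj_mat(1)[of M p] by simp

lemma mult_minv_right:
  fixes M :: "real mat"
  assumes M: "M \<in> carrier_mat p p" and "det M \<noteq> 0"
  shows "M * minv M = 1\<^sub>m p"
proof -
  have "M \<in> Units (ring_mat TYPE(real) p ())" by (rule det_non_zero_imp_unit[OF assms])
  then obtain B where "mat_inverse M = Some B"
    using mat_inverse(1)[OF M, of "()"] by (cases "mat_inverse M") auto
  then show ?thesis using mat_inverse(2)[OF M] unfolding minv_def by auto
qed

lemma det_nonzero_if_vnorm_lower_bound:
  fixes M :: "real mat"
  assumes M: "M \<in> carrier_mat p p" and c: "0 < c"
    and lower: "\<And>x. x \<in> carrier_vec p \<Longrightarrow> c * vnorm x \<le> vnorm (M *\<^sub>v x)"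
  shows "det M \<noteq> 0"
proof
  assume "det M = 0"
  then obtain v where v: "v \<in> carrier_vec p" "v \<noteq> 0\<^sub>v p" "M *\<^sub>v v = 0\<^sub>v p"
    using det_0_iff_vec_prod_zero_field[OF M] by auto
  have "c * vnorm v \<le> 0" using lower[OF v(1)] v(3) by (simp add: vnorm_def)
  then have "vnorm v = 0" using c vnorm_nonneg[of v] by (simp add: mult_le_0_iff)
  then show False using v vnorm_eq_0_iff by auto
qed

lemma solve_minv:
  fixes A :: "real mat"
  assumes A: "A \<in> carrier_mat p p" and b: "b \<in> carrier_vec p" and c: "0 < c"
    and lower: "\<And>x. x \<in> carrier_vec p \<Longrightarrow> c * vnorm x \<le> vnorm (A *\<^sub>v x)"
  shows "minv A *\<^sub>v b \<in> carrier_vec p" and "A *\<^sub>v (minv A *\<^sub>v b) = b"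
proof -
  have "A * minv A = 1\<^sub>m p"
    by (intro mult_minv_right[OF A] det_nonzero_if_vnorm_lower_bound[OF A c lower])
  then show "minv A *\<^sub>v b \<in> carrier_vec p" and "A *\<^sub>v (minv A *\<^sub>v b) = b"
    using A b minv_carrier_mat[OF A] by (auto simp: assoc_mult_mat_vec[symmetric])
qed

lemma perturbed_solution_error:
  fixes A N :: "real mat"
  assumes A: "A \<in> carrier_mat p p" and N: "N \<in> carrier_mat p p"
    and b: "b \<in> carrier_vec p" and n: "n \<in> carrier_vec p" and \<beta>: "\<beta> \<in> carrier_vec p"
    and A\<beta>: "A *\<^sub>v \<beta> = b"
    and lowerA: "\<And>x. x \<in> carrier_vec p \<Longrightarrow> s * vnorm x \<le> vnorm (A *\<^sub>v x)"
    and upperN: "\<And>x. x \<in> carrier_vec p \<Longrightarrow> vnorm (N *\<^sub>v x) \<le> \<tau> * vnorm x"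
    and \<tau>: "\<tau> < s"
  shows "(s - \<tau>) * vnorm (minv (A + N) *\<^sub>v (b + n) - \<beta>) \<le> vnorm n + \<tau> * vnorm \<beta>"
proof -
  define M where "M = A + N"
  have Mc: "M \<in> carrier_mat p p" unfolding M_def using A N by simp
  have lowerM: "(s - \<tau>) * vnorm x \<le> vnorm (M *\<^sub>v x)" if x: "x \<in> carrier_vec p" for x
  proof -
    have "vnorm (A *\<^sub>v x) - vnorm (N *\<^sub>v x) \<le> vnorm (M *\<^sub>v x)"
      unfolding M_def using vnorm_add_ge[of "A *\<^sub>v x" "N *\<^sub>v x"] A N x
      by (simp add: add_mult_distrib_mat_vec)
    then show ?thesis using lowerA[OF x] upperN[OF x] by (simp add: algebra_simps)
  qed
  have "det M \<noteq> 0" using det_nonzero_if_vnorm_lower_bound[OF Mc _ lowerM] \<tau> by simp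
  then have MM: "M * minv M = 1\<^sub>m p" and Mi: "minv M \<in> carrier_mat p p"
    using mult_minv_right[OF Mc] minv_carrier_mat[OF Mc] by auto
  define e where "e = minv M *\<^sub>v (b + n) - \<beta>"
  have ec: "e \<in> carrier_vec p" unfolding e_def using Mi b n \<beta> by simp
  have "M *\<^sub>v e = M *\<^sub>v (minv M *\<^sub>v (b + n)) - M *\<^sub>v \<beta>"
    unfolding e_def using Mc Mi b n \<beta> by (simp add: mult_minus_distrib_mat_vec)
  also have "M *\<^sub>v (minv M *\<^sub>v (b + n)) = b + n"
    using Mc Mi MM b n by (simp add: assoc_mult_mat_vec[symmetric])
  also have "M *\<^sub>v \<beta> = b + N *\<^sub>v \<beta>"
    unfolding M_def using A N \<beta> A\<beta> by (simp add: add_mult_distrib_mat_vec)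
  also have "b + n - (b + N *\<^sub>v \<beta>) = n - N *\<^sub>v \<beta>" using b n N \<beta> by (auto simp: vec_eq_iff)
  finally have "(s - \<tau>) * vnorm e \<le> vnorm (n - N *\<^sub>v \<beta>)" using lowerM[OF ec] by simp
  also have "\<dots> \<le> vnorm n + \<tau> * vnorm \<beta>"
    using vnorm_diff_le[of n "N *\<^sub>v \<beta>"] upperN[OF \<beta>] n N \<beta> by simp
  finally show ?thesis unfolding e_def M_def .
qed

lemma borel_measurable_det:
  fixes F :: "'w \<Rightarrow> real mat"
  assumes F: "\<And>\<omega>. F \<omega> \<in> carrier_mat m m"
    and meas: "\<And>i j. i < m \<Longrightarrow> j < m \<Longrightarrow> (\<lambda>\<omega>. F \<omega> $$ (i,j)) \<in> borel_measurable M"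
  shows "(\<lambda>\<omega>. det (F \<omega>)) \<in> borel_measurable M"
proof -
  have "(\<lambda>\<omega>. det (F \<omega>))
      = (\<lambda>\<omega>. \<Sum>\<pi>\<in>{\<pi>. \<pi> permutes {0..<m}}. signof \<pi> * (\<Prod>i=0..<m. F \<omega> $$ (i, \<pi> i)))"
    using det_def'[OF F] by auto
  also have "\<dots> \<in> borel_measurable M"
  proof (intro borel_measurable_sum borel_measurable_times borel_measurable_const borel_measurable_prod)
    fix \<pi> i assume "\<pi> \<in> {\<pi>. \<pi> permutes {0..<m}}" "i \<in> {0..<m}"
    then show "(\<lambda>\<omega>. F \<omega> $$ (i, \<pi> i)) \<in> borel_measurable M"
      using permutes_in_image by (fastforce intro: meas)
  qed
  finally show ?thesis .
qed

lemma borel_measurable_minv_entry: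
  fixes F :: "'w \<Rightarrow> real mat"
  assumes F: "\<And>\<omega>. F \<omega> \<in> carrier_mat m m"
    and meas: "\<And>i j. i < m \<Longrightarrow> j < m \<Longrightarrow> (\<lambda>\<omega>. F \<omega> $$ (i,j)) \<in> borel_measurable M"
    and ij: "i < m" "j < m"
  shows "(\<lambda>\<omega>. minv (F \<omega>) $$ (i,j)) \<in> borel_measurable M"
proof -
  have cofactor: "(\<lambda>\<omega>. det (mat_delete (F \<omega>) j i)) \<in> borel_measurable M"
  proof (rule borel_measurable_det[of _ "m - 1"])
    show "mat_delete (F \<omega>) j i \<in> carrier_mat (m - 1) (m - 1)" for \<omega> using mat_delete_carrier[OF F] .
    fix a b assume ab: "a < m - 1" "b < m - 1"
    then have "(\<lambda>\<omega>. F \<omega> $$ (if a < j then a else Suc a, if b < i then b else Suc b)) \<in> borel_measurable M"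
      by (intro meas) auto
    moreover have "mat_delete (F \<omega>) j i $$ (a, b) = F \<omega> $$ (if a < j then a else Suc a, if b < i then b else Suc b)"
      for \<omega> unfolding mat_delete_def using ab F[of \<omega>] by auto
    ultimately show "(\<lambda>\<omega>. mat_delete (F \<omega>) j i $$ (a, b)) \<in> borel_measurable M" by simp
  qed
  have "minv (F \<omega>) $$ (i,j) = (-1)^(j+i) * det (mat_delete (F \<omega>) j i) / det (F \<omega>)" for \<omega>
    unfolding minv_eq_adj_mat[OF F] using ij F[of \<omega>] by (simp add: adj_mat_def cofactor_def)
  then show ?thesis using cofactor borel_measurable_det[OF F meas] by simp
qed

section \<open>The operator norm on an integer net\<close>

definition bilinear_norm :: "real mat \<Rightarrow> real" where
  "bilinear_norm N = Sup {u \<bullet> (N *\<^sub>v v) | u v.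
     u \<in> carrier_vec (dim_row N) \<and> v \<in> carrier_vec (dim_col N) \<and> vnorm u \<le> 1 \<and> vnorm v \<le> 1}"

context
  fixes N :: "real mat" and m n :: nat
  assumes N: "N \<in> carrier_mat m n"
begin

private abbreviation "bilinear_values \<equiv> {u \<bullet> (N *\<^sub>v v) | u v.
  u \<in> carrier_vec m \<and> v \<in> carrier_vec n \<and> vnorm u \<le> 1 \<and> vnorm v \<le> 1}"

private lemma bilinear_norm_alt: "bilinear_norm N = Sup bilinear_values"
  using N unfolding bilinear_norm_def by simp

private lemma zero_in_bilinear_values: "0 \<in> bilinear_values"
  unfolding mem_Collect_eq by (rule exI[of _ "0\<^sub>v m"], rule exI[of _ "0\<^sub>v n"]) (use N in auto)

private lemma bilinear_values_bdd: "bdd_above bilinear_values"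
proof (rule bdd_aboveI[of _ "frob_norm N"])
  fix y assume "y \<in> bilinear_values"
  then obtain u v where uv: "y = u \<bullet> (N *\<^sub>v v)" "u \<in> carrier_vec m" "v \<in> carrier_vec n"
    "vnorm u \<le> 1" "vnorm v \<le> 1" by auto
  have "y \<le> vnorm u * vnorm (N *\<^sub>v v)"
    using abs_scalar_prod_le_vnorm[of u "N *\<^sub>v v"] uv N by simp
  also have "\<dots> \<le> 1 * (frob_norm N * 1)"
    using uv N frob_norm_nonneg[of N] vnorm_nonneg[of v] vnorm_nonneg[of "N *\<^sub>v v"]
    by (intro mult_mono mult_left_mono order.trans[OF vnorm_mult_mat_vec_le_frob_norm]) auto
  finally show "y \<le> frob_norm N" by simp
qed

lemma bilinear_norm_nonneg: "bilinear_norm N \<ge> 0"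
  unfolding bilinear_norm_alt using zero_in_bilinear_values bilinear_values_bdd by (rule cSup_upper)

lemma bilinear_norm_least:
  assumes "\<And>u v. u \<in> carrier_vec m \<Longrightarrow> v \<in> carrier_vec n \<Longrightarrow> vnorm u \<le> 1 \<Longrightarrow> vnorm v \<le> 1
    \<Longrightarrow> u \<bullet> (N *\<^sub>v v) \<le> c"
  shows "bilinear_norm N \<le> c"
  unfolding bilinear_norm_alt using zero_in_bilinear_values assms by (intro cSup_least) auto

lemma scalar_prod_mult_mat_vec_le_bilinear_norm:
  assumes u: "u \<in> carrier_vec m" and v: "v \<in> carrier_vec n"
  shows "u \<bullet> (N *\<^sub>v v) \<le> bilinear_norm N * (vnorm u * vnorm v)"
proof (cases "vnorm u = 0 \<or> vnorm v = 0")
  case True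
  have "u \<bullet> (N *\<^sub>v v) \<le> vnorm u * vnorm (N *\<^sub>v v)"
    using abs_scalar_prod_le_vnorm[of u "N *\<^sub>v v"] u N by simp
  also have "\<dots> \<le> vnorm u * (frob_norm N * vnorm v)"
    using vnorm_mult_mat_vec_le_frob_norm[of v N] N v vnorm_nonneg[of u] by (simp add: mult_left_mono)
  finally show ?thesis using True by auto
next
  case False
  then have nu: "vnorm u > 0" and nv: "vnorm v > 0" using vnorm_nonneg[of u] vnorm_nonneg[of v] by auto
  have "((1 / vnorm u) \<cdot>\<^sub>v u) \<bullet> (N *\<^sub>v ((1 / vnorm v) \<cdot>\<^sub>v v)) \<in> bilinear_values"
    unfolding mem_Collect_eq
    by (rule exI[of _ "(1 / vnorm u) \<cdot>\<^sub>v u"], rule exI[of _ "(1 / vnorm v) \<cdot>\<^sub>v v"])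
      (use u v nu nv in \<open>auto simp: vnorm_smult\<close>)
  then have "((1 / vnorm u) \<cdot>\<^sub>v u) \<bullet> (N *\<^sub>v ((1 / vnorm v) \<cdot>\<^sub>v v)) \<le> bilinear_norm N"
    unfolding bilinear_norm_alt using bilinear_values_bdd by (rule cSup_upper)
  also have "((1 / vnorm u) \<cdot>\<^sub>v u) \<bullet> (N *\<^sub>v ((1 / vnorm v) \<cdot>\<^sub>v v)) = u \<bullet> (N *\<^sub>v v) / (vnorm u * vnorm v)"
    using u v N by (simp add: mult_mat_vec)
  finally show ?thesis using nu nv by (simp add: field_simps)
qed

lemma vnorm_mult_mat_vec_le_bilinear_norm:
  assumes x: "x \<in> carrier_vec n"
  shows "vnorm (N *\<^sub>v x) \<le> bilinear_norm N * vnorm x"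
proof -
  have "vnorm (N *\<^sub>v x) * vnorm (N *\<^sub>v x) = (N *\<^sub>v x) \<bullet> (N *\<^sub>v x)"
    by (metis power2_eq_square vnorm_square)
  also have "\<dots> \<le> vnorm (N *\<^sub>v x) * (bilinear_norm N * vnorm x)"
    using scalar_prod_mult_mat_vec_le_bilinear_norm[of "N *\<^sub>v x" x] N x by (simp add: algebra_simps)
  finally show ?thesis
    using vnorm_nonneg[of "N *\<^sub>v x"] vnorm_nonneg[of x] bilinear_norm_nonneg
    by (cases "vnorm (N *\<^sub>v x) = 0") (auto simp: mult_le_cancel_left)
qed

end

definition int_net :: "nat \<Rightarrow> real vec set" where
  "int_net p = {z \<in> carrier_vec p. (\<forall>i<p. z $ i \<in> \<int>) \<and> (vnorm z)\<^sup>2 \<le> 25 * real p / 4}"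

text \<open>Rounding the coordinates of \<open>2 \<surd>p u\<close> shows that \<open>int_net p\<close>, scaled by \<open>1 / (2 \<surd>p)\<close>,
  is a \<open>1/4\<close>-net of the unit ball.\<close>

lemma int_net_approx:
  assumes u: "u \<in> carrier_vec p" and un: "vnorm u \<le> 1" and p: "0 < p"
  obtains z where "z \<in> int_net p" "vnorm (u - (1 / (2 * sqrt p)) \<cdot>\<^sub>v z) \<le> 1/4"
    "vnorm ((1 / (2 * sqrt p)) \<cdot>\<^sub>v z) \<le> 5/4"
proof -
  define c where "c = 2 * sqrt (real p)"
  define z where "z = vec p (\<lambda>i. real_of_int (round (c * u $ i)))"
  have c: "c > 0" unfolding c_def using p by simp
  have z: "z \<in> carrier_vec p" unfolding z_def by simp
  have round_err: "vnorm (z - c \<cdot>\<^sub>v u) \<le> sqrt (real p) / 2"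
  proof -
    have "(vnorm (z - c \<cdot>\<^sub>v u))\<^sup>2 = (\<Sum>i<p. (real_of_int (round (c * u $ i)) - c * u $ i)\<^sup>2)"
      unfolding vnorm_square_eq_sum using u by (simp add: z_def)
    also have "\<dots> \<le> (\<Sum>i<p. (1/2)\<^sup>2)"
    proof (rule sum_mono)
      fix i
      have "\<bar>real_of_int (round (c * u $ i)) - c * u $ i\<bar> \<le> 1/2" by (rule of_int_round_abs_le)
      then show "(real_of_int (round (c * u $ i)) - c * u $ i)\<^sup>2 \<le> (1/2)\<^sup>2"
        by (metis abs_ge_zero power2_abs power_mono)
    qed
    also have "\<dots> = (sqrt (real p) / 2)\<^sup>2" by (simp add: power_divide)
    finally show ?thesis by (rule power2_le_imp_le) simp
  qed
  have "u - (1 / c) \<cdot>\<^sub>v z = (- 1 / c) \<cdot>\<^sub>v (z - c \<cdot>\<^sub>v u)"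
    using u z c by (auto simp: vec_eq_iff field_simps)
  then have close: "vnorm (u - (1 / c) \<cdot>\<^sub>v z) \<le> 1/4"
    using round_err c p by (simp add: vnorm_smult c_def field_simps)
  have "z = (z - c \<cdot>\<^sub>v u) + c \<cdot>\<^sub>v u" using z u by (auto simp: vec_eq_iff)
  then have "vnorm z \<le> vnorm (z - c \<cdot>\<^sub>v u) + vnorm (c \<cdot>\<^sub>v u)"
    using vnorm_add_le[of "z - c \<cdot>\<^sub>v u" "c \<cdot>\<^sub>v u"] z u by simp
  also have "vnorm (c \<cdot>\<^sub>v u) \<le> c" using un c by (simp add: vnorm_smult mult_left_le)
  finally have zn: "vnorm z \<le> 5/2 * sqrt (real p)" using round_err unfolding c_def by simp
  then have "(vnorm z)\<^sup>2 \<le> (5/2 * sqrt (real p))\<^sup>2" using vnorm_nonneg by (intro power_mono) auto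
  then have "z \<in> int_net p" unfolding int_net_def using z
    by (auto simp: z_def power_mult_distrib power_divide)
  moreover have "vnorm ((1 / c) \<cdot>\<^sub>v z) \<le> 5/4"
    using zn c unfolding vnorm_smult c_def by (simp add: field_simps)
  ultimately show ?thesis using that close unfolding c_def by blast
qed

text \<open>Split unit vectors into a scaled net point plus a remainder of norm \<open>\<le> 1/4\<close>.\<close>

lemma scalar_prod_le_int_net_bound:
  fixes N :: "real mat"
  assumes N: "N \<in> carrier_mat p p" and p: "0 < p"
    and net: "\<And>z w. z \<in> int_net p \<Longrightarrow> w \<in> int_net p \<Longrightarrow> z \<bullet> (N *\<^sub>v w) \<le> T"
    and u: "u \<in> carrier_vec p" "vnorm u \<le> 1" and v: "v \<in> carrier_vec p" "vnorm v \<le> 1"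
  shows "u \<bullet> (N *\<^sub>v v) \<le> T / (4 * real p) + (5/16 + 1/4) * bilinear_norm N"
proof -
  let ?S = "bilinear_norm N"
  define c where "c = 1 / (2 * sqrt (real p))"
  have S: "?S \<ge> 0" by (rule bilinear_norm_nonneg[OF N])
  obtain z where z: "z \<in> int_net p" "vnorm (u - c \<cdot>\<^sub>v z) \<le> 1/4" "vnorm (c \<cdot>\<^sub>v z) \<le> 5/4"
    using int_net_approx[OF u p] unfolding c_def by blast
  obtain w where w: "w \<in> int_net p" "vnorm (v - c \<cdot>\<^sub>v w) \<le> 1/4" "vnorm (c \<cdot>\<^sub>v w) \<le> 5/4"
    using int_net_approx[OF v p] unfolding c_def by blast
  define a b where "a = c \<cdot>\<^sub>v z" and "b = c \<cdot>\<^sub>v w"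
  have zc: "z \<in> carrier_vec p" "w \<in> carrier_vec p" using z w unfolding int_net_def by auto
  then have ab: "a \<in> carrier_vec p" "b \<in> carrier_vec p" unfolding a_def b_def by auto
  have "u \<bullet> (N *\<^sub>v v) = a \<bullet> (N *\<^sub>v b) + a \<bullet> (N *\<^sub>v (v - b)) + (u - a) \<bullet> (N *\<^sub>v v)"
    using u v ab N
    by (simp add: minus_scalar_prod_distrib[of _ p] mult_minus_distrib_mat_vec scalar_prod_minus_distrib[of _ p])
  also have "a \<bullet> (N *\<^sub>v b) = c\<^sup>2 * (z \<bullet> (N *\<^sub>v w))"
    unfolding a_def b_def using N zc by (simp add: mult_mat_vec power2_eq_square)
  also have "\<dots> \<le> T / (4 * real p)"
    using net[OF z(1) w(1)] unfolding c_def by (simp add: power_divide divide_right_mono)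
  also have "a \<bullet> (N *\<^sub>v (v - b)) \<le> ?S * (vnorm a * vnorm (v - b))"
    using scalar_prod_mult_mat_vec_le_bilinear_norm[OF N] ab v by simp
  also have "\<dots> \<le> ?S * (5/4 * (1/4))"
    using z(3) w(2) S vnorm_nonneg[of a] vnorm_nonneg[of "v - b"] unfolding a_def b_def
    by (intro mult_left_mono mult_mono) auto
  also have "(u - a) \<bullet> (N *\<^sub>v v) \<le> ?S * (vnorm (u - a) * vnorm v)"
    using scalar_prod_mult_mat_vec_le_bilinear_norm[OF N] ab u v by simp
  also have "\<dots> \<le> ?S * (1/4 * 1)"
    using z(2) u(2) v(2) S vnorm_nonneg[of "u - a"] vnorm_nonneg[of v] unfolding a_def
    by (intro mult_left_mono mult_mono) auto
  finally show ?thesis by (simp add: algebra_simps)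
qed

lemma bilinear_norm_le_int_net:
  fixes N :: "real mat"
  assumes N: "N \<in> carrier_mat p p" and p: "0 < p"
    and net: "\<And>z w. z \<in> int_net p \<Longrightarrow> w \<in> int_net p \<Longrightarrow> z \<bullet> (N *\<^sub>v w) \<le> T"
  shows "bilinear_norm N \<le> 4 * T / (7 * real p)"
proof -
  have "bilinear_norm N \<le> T / (4 * real p) + (5/16 + 1/4) * bilinear_norm N"
    using scalar_prod_le_int_net_bound[OF N p net] by (intro bilinear_norm_least[OF N])
  then show ?thesis using p by (simp add: field_simps)
qed

lemma sum_half_power_abs_le: "(\<Sum>k\<in>{-int n..int n}. (1/2::real) ^ nat \<bar>k\<bar>) \<le> 3 - 2 * (1/2) ^ n"
proof (induction n)
  case (Suc n)
  have "{-int (Suc n)..int (Suc n)} = insert (int (Suc n)) (insert (- int (Suc n)) {-int n..int n})"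
    by auto
  then have "(\<Sum>k\<in>{-int (Suc n)..int (Suc n)}. (1/2::real) ^ nat \<bar>k\<bar>)
      = 2 * (1/2) ^ Suc n + (\<Sum>k\<in>{-int n..int n}. (1/2::real) ^ nat \<bar>k\<bar>)"
    by (simp add: nat_add_distrib)
  also have "\<dots> \<le> 3 - 2 * (1/2) ^ Suc n" using Suc by simp
  finally show ?case .
qed simp

lemma exp_neg_square_le_half_power: "exp (- (real_of_int k)\<^sup>2) \<le> (1/2) ^ nat \<bar>k\<bar>"
proof -
  have "\<bar>k\<bar> * 1 \<le> \<bar>k\<bar> * \<bar>k\<bar>"
  proof (cases "k = 0")
    case False
    then have "1 \<le> \<bar>k\<bar>" by simp
    then show ?thesis by (intro mult_left_mono) auto
  qed simp
  then have "real_of_int \<bar>k\<bar> \<le> real_of_int (\<bar>k\<bar> * \<bar>k\<bar>)" by linarith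
  then have "real (nat \<bar>k\<bar>) \<le> (real_of_int k)\<^sup>2" by (simp add: power2_eq_square abs_mult[symmetric])
  then have "exp (real (nat \<bar>k\<bar>)) \<le> exp ((real_of_int k)\<^sup>2)" by simp
  moreover have "(2::real) ^ nat \<bar>k\<bar> \<le> exp 1 ^ nat \<bar>k\<bar>"
    using exp_ge_add_one_self[of 1] by (intro power_mono) auto
  moreover have "exp 1 ^ nat \<bar>k\<bar> = exp (real (nat \<bar>k\<bar>))"
    using exp_of_nat_mult[of "nat \<bar>k\<bar>" "1::real"] by simp
  ultimately have "2 ^ nat \<bar>k\<bar> \<le> exp ((real_of_int k)\<^sup>2)" by linarith
  then show ?thesis by (simp add: exp_minus power_one_over inverse_eq_divide field_simps)
qed

lemma sum_exp_neg_square_le: "(\<Sum>k\<in>{-r..r}. exp (- (real_of_int k)\<^sup>2)) \<le> 3"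
proof (cases "r < 0")
  case False
  then have "{-r..r} = {-int (nat r)..int (nat r)}" by simp
  then have "(\<Sum>k\<in>{-r..r}. exp (- (real_of_int k)\<^sup>2)) \<le> (\<Sum>k\<in>{-int (nat r)..int (nat r)}. (1/2) ^ nat \<bar>k\<bar>)"
    by (simp add: sum_mono exp_neg_square_le_half_power)
  also have "\<dots> \<le> 3 - 2 * (1/2) ^ nat r" by (rule sum_half_power_abs_le)
  also have "\<dots> \<le> 3" by simp
  finally show ?thesis .
qed simp

text \<open>Rankin's trick: every integer point of squared norm \<open>\<le> B\<close> has weight
  \<open>exp (B - \<parallel>g\<parallel>\<^sup>2) \<ge> 1\<close>, and the total weight factorises over the coordinates.\<close>

lemma card_int_points_le:
  fixes r :: int
  shows "real (card {g \<in> PiE {..<p} (\<lambda>_. {-r..r}). (\<Sum>i<p. (real_of_int (g i))\<^sup>2) \<le> B})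
    \<le> exp B * 3 ^ p"
proof -
  let ?box = "PiE {..<p} (\<lambda>_. {-r..r})"
  let ?weight = "\<lambda>g. exp B * (\<Prod>i<p. exp (- (real_of_int (g i))\<^sup>2))"
  have finite_box: "finite ?box" by (intro finite_PiE) auto
  have "real (card {g \<in> ?box. (\<Sum>i<p. (real_of_int (g i))\<^sup>2) \<le> B})
      = (\<Sum>g \<in> {g \<in> ?box. (\<Sum>i<p. (real_of_int (g i))\<^sup>2) \<le> B}. 1)" by simp
  also have "\<dots> \<le> (\<Sum>g \<in> {g \<in> ?box. (\<Sum>i<p. (real_of_int (g i))\<^sup>2) \<le> B}. ?weight g)"
  proof (rule sum_mono)
    fix g assume "g \<in> {g \<in> ?box. (\<Sum>i<p. (real_of_int (g i))\<^sup>2) \<le> B}"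
    then have "1 \<le> exp (B + (\<Sum>i<p. - (real_of_int (g i))\<^sup>2))" by (simp add: sum_negf)
    then show "1 \<le> ?weight g" by (simp add: exp_add exp_sum)
  qed
  also have "\<dots> \<le> (\<Sum>g \<in> ?box. ?weight g)"
  proof (rule sum_mono2[OF finite_box])
    show "0 \<le> ?weight g" for g by (intro mult_nonneg_nonneg prod_nonneg) auto
  qed auto
  also have "\<dots> = exp B * (\<Sum>g \<in> ?box. \<Prod>i<p. exp (- (real_of_int (g i))\<^sup>2))"
    by (rule sum_distrib_left[symmetric])
  also have "\<dots> = exp B * (\<Prod>i<p. \<Sum>k\<in>{-r..r}. exp (- (real_of_int k)\<^sup>2))"
    using prod_sum_PiE[of "{..<p}" "\<lambda>_. {-r..r}" "\<lambda>i k. exp (- (real_of_int k)\<^sup>2)"] by simp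
  also have "\<dots> \<le> exp B * (\<Prod>i<p. 3)"
  proof (intro mult_left_mono prod_mono conjI)
    show "0 \<le> (\<Sum>k\<in>{-r..r}. exp (- (real_of_int k)\<^sup>2))" by (intro sum_nonneg) auto
  qed (auto intro: sum_exp_neg_square_le)
  finally show ?thesis by simp
qed

lemma int_net_subset_image:
  "int_net p \<subseteq> (\<lambda>g. vec p (\<lambda>i. real_of_int (g i))) `
     {g \<in> PiE {..<p} (\<lambda>_. {-int (3 * p)..int (3 * p)}). (\<Sum>i<p. (real_of_int (g i))\<^sup>2) \<le> 25 * real p / 4}"
proof
  fix z assume z: "z \<in> int_net p"
  then have zc: "z \<in> carrier_vec p" and zi: "\<And>i. i < p \<Longrightarrow> z $ i \<in> \<int>"
    and zn: "(\<Sum>i<p. (z $ i)\<^sup>2) \<le> 25 * real p / 4"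
    unfolding int_net_def by (auto simp: vnorm_square_eq_sum)
  define g where "g = restrict (\<lambda>i. \<lfloor>z $ i\<rfloor>) {..<p}"
  have gz: "real_of_int (g i) = z $ i" if "i < p" for i
    using zi[OF that] that unfolding g_def by (auto elim: Ints_cases)
  have bound: "\<bar>g i\<bar> \<le> int (3 * p)" if i: "i < p" for i
  proof -
    have "(z $ i)\<^sup>2 \<le> (\<Sum>j<p. (z $ j)\<^sup>2)" using i by (intro member_le_sum) auto
    also have "\<dots> \<le> 9 * real p * 1" using zn by simp
    also have "\<dots> \<le> (3 * real p)\<^sup>2" using i by (simp add: power2_eq_square)
    finally have "\<bar>z $ i\<bar> \<le> 3 * real p" by (rule power2_le_imp_le[of "\<bar>z $ i\<bar>", simplified]) simp
    then show ?thesis using gz[OF i] by linarith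
  qed
  have "g i \<in> {-int (3 * p)..int (3 * p)}" if "i < p" for i
    using bound[OF that] by (simp only: atLeastAtMost_iff) arith
  then have "g \<in> PiE {..<p} (\<lambda>_. {-int (3 * p)..int (3 * p)})"
    unfolding g_def by (auto simp: PiE_iff)
  moreover have "(\<Sum>i<p. (real_of_int (g i))\<^sup>2) \<le> 25 * real p / 4" using zn gz by simp
  moreover have "z = vec p (\<lambda>i. real_of_int (g i))" using zc gz by (auto simp: vec_eq_iff)
  ultimately show "z \<in> (\<lambda>g. vec p (\<lambda>i. real_of_int (g i))) `
     {g \<in> PiE {..<p} (\<lambda>_. {-int (3 * p)..int (3 * p)}). (\<Sum>i<p. (real_of_int (g i))\<^sup>2) \<le> 25 * real p / 4}"
    by blast
qed

lemma finite_int_points: "finite {g \<in> PiE {..<p :: nat} (\<lambda>_. {-r..r :: int}). P g}"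
proof (rule finite_subset)
  show "finite (PiE {..<p} (\<lambda>_. {-r..r}))" by (intro finite_PiE) auto
qed auto

lemma finite_int_net: "finite (int_net p)"
  by (rule finite_subset[OF int_net_subset_image]) (intro finite_imageI finite_int_points)

lemma card_int_net_le: "real (card (int_net p)) \<le> exp (9 * real p)"
proof -
  have "card (int_net p) \<le> card {g \<in> PiE {..<p} (\<lambda>_. {-int (3 * p)..int (3 * p)}).
      (\<Sum>i<p. (real_of_int (g i))\<^sup>2) \<le> 25 * real p / 4}"
    by (rule order.trans[OF card_mono[OF finite_imageI[OF finite_int_points] int_net_subset_image]
          card_image_le[OF finite_int_points]])
  then have "real (card (int_net p)) \<le> exp (25 * real p / 4) * 3 ^ p"
    using card_int_points_le[of p "int (3 * p)" "25 * real p / 4"] by linarith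
  also have "(3::real) ^ p \<le> exp 2 ^ p" using exp_ge_add_one_self[of 2] by (intro power_mono) auto
  also have "exp 2 ^ p = exp (2 * real p)" using exp_of_nat_mult[of p "2::real"] by (simp add: mult.commute)
  also have "exp (25 * real p / 4) * exp (2 * real p) \<le> exp (9 * real p)"
    by (simp add: exp_add[symmetric])
  finally show ?thesis by simp
qed

section \<open>Gaussian tail bounds\<close>

lemma prob_space_gauss: "0 < \<sigma> \<Longrightarrow> prob_space (gauss \<sigma>)"
  unfolding gauss_def by (rule prob_space_normal_density)

lemma sets_gauss [simp]: "sets (gauss \<sigma>) = sets borel"
  unfolding gauss_def by simp

lemma borel_measurable_gauss: "borel_measurable (gauss \<sigma>) = borel_measurable borel"
  by (rule measurable_cong_sets) auto

lemma borel_measurable_component_gauss_PiM: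
  "k \<in> I \<Longrightarrow> (\<lambda>x. x k) \<in> borel_measurable (PiM I (\<lambda>_. gauss \<sigma>))"
proof -
  assume "k \<in> I"
  then have "(\<lambda>x. x k) \<in> measurable (PiM I (\<lambda>_. gauss \<sigma>)) (gauss \<sigma>)"
    by (rule measurable_component_singleton)
  also have "measurable (PiM I (\<lambda>_. gauss \<sigma>)) (gauss \<sigma>) = borel_measurable (PiM I (\<lambda>_. gauss \<sigma>))"
    by (rule measurable_cong_sets) auto
  finally show ?thesis .
qed

lemma nn_integral_normal_density:
  assumes "0 < \<sigma>" shows "(\<integral>\<^sup>+x. ennreal (normal_density \<mu> \<sigma> x) \<partial>lborel) = 1"
proof -
  interpret prob_space "density lborel (normal_density \<mu> \<sigma>)"
    using assms by (rule prob_space_normal_density)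
  show ?thesis using emeasure_space_1 by (simp add: emeasure_density)
qed

text \<open>Both moment generating functions are computed by completing the square, which turns
  the integrand into a multiple of another normal density.\<close>

lemma nn_integral_gauss_exp_mult:
  assumes s: "0 < \<sigma>"
  shows "(\<integral>\<^sup>+x. ennreal (exp (a * x)) \<partial>gauss \<sigma>) = ennreal (exp (a\<^sup>2 * \<sigma>\<^sup>2 / 2))"
proof -
  have density: "normal_density 0 \<sigma> x * exp (a * x) = exp (a\<^sup>2 * \<sigma>\<^sup>2 / 2) * normal_density (a * \<sigma>\<^sup>2) \<sigma> x"
    for x
  proof -
    have "-(x - 0)\<^sup>2 / (2 * \<sigma>\<^sup>2) + a * x = a\<^sup>2 * \<sigma>\<^sup>2 / 2 + (-(x - a * \<sigma>\<^sup>2)\<^sup>2 / (2 * \<sigma>\<^sup>2))"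
      using s by (simp add: field_simps power2_eq_square)
    then show ?thesis unfolding normal_density_def by (simp add: exp_add[symmetric] algebra_simps)
  qed
  have "(\<integral>\<^sup>+x. ennreal (exp (a * x)) \<partial>gauss \<sigma>)
      = (\<integral>\<^sup>+x. ennreal (exp (a\<^sup>2 * \<sigma>\<^sup>2 / 2)) * ennreal (normal_density (a * \<sigma>\<^sup>2) \<sigma> x) \<partial>lborel)"
    unfolding gauss_def by (subst nn_integral_density) (auto simp: ennreal_mult'[symmetric] density)
  also have "\<dots> = ennreal (exp (a\<^sup>2 * \<sigma>\<^sup>2 / 2))"
    by (simp add: nn_integral_cmult nn_integral_normal_density[OF s])
  finally show ?thesis .
qed

lemma nn_integral_gauss_exp_square:
  assumes s: "0 < \<sigma>"
  shows "(\<integral>\<^sup>+x. ennreal (exp (x\<^sup>2 / (4 * \<sigma>\<^sup>2))) \<partial>gauss \<sigma>) = ennreal (sqrt 2)"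
proof -
  have density: "normal_density 0 \<sigma> x * exp (x\<^sup>2 / (4 * \<sigma>\<^sup>2)) = sqrt 2 * normal_density 0 (sqrt 2 * \<sigma>) x"
    for x
  proof -
    have "-(x - 0)\<^sup>2 / (2 * \<sigma>\<^sup>2) + x\<^sup>2 / (4 * \<sigma>\<^sup>2) = -(x - 0)\<^sup>2 / (2 * (sqrt 2 * \<sigma>)\<^sup>2)"
      using s by (simp add: field_simps power2_eq_square)
    then have "exp (-(x - 0)\<^sup>2 / (2 * \<sigma>\<^sup>2)) * exp (x\<^sup>2 / (4 * \<sigma>\<^sup>2)) = exp (-(x - 0)\<^sup>2 / (2 * (sqrt 2 * \<sigma>)\<^sup>2))"
      by (metis exp_add)
    moreover have "sqrt (2 * pi * (sqrt 2 * \<sigma>)\<^sup>2) = sqrt 2 * sqrt (2 * pi * \<sigma>\<^sup>2)"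
      by (simp add: power_mult_distrib real_sqrt_mult[symmetric] mult.commute mult.left_commute)
    ultimately show ?thesis unfolding normal_density_def using s by (simp add: field_simps)
  qed
  have "(\<integral>\<^sup>+x. ennreal (exp (x\<^sup>2 / (4 * \<sigma>\<^sup>2))) \<partial>gauss \<sigma>)
      = (\<integral>\<^sup>+x. ennreal (sqrt 2) * ennreal (normal_density 0 (sqrt 2 * \<sigma>) x) \<partial>lborel)"
    unfolding gauss_def by (subst nn_integral_density) (auto simp: ennreal_mult'[symmetric] density)
  also have "\<dots> = ennreal (sqrt 2)"
    using s by (simp add: nn_integral_cmult nn_integral_normal_density)
  finally show ?thesis .
qed

lemma chernoff_bound:
  assumes f: "f \<in> borel_measurable M" and \<theta>: "0 < \<theta>"
  shows "emeasure M {x \<in> space M. t \<le> f x}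
    \<le> ennreal (exp (- \<theta> * t)) * (\<integral>\<^sup>+x. ennreal (exp (\<theta> * f x)) \<partial>M)"
proof -
  have "t \<le> f x \<longleftrightarrow> 1 \<le> exp (- \<theta> * t) * exp (\<theta> * f x)" for x
    using \<theta> by (simp add: exp_add[symmetric] algebra_simps zero_le_mult_iff)
  then have "{x \<in> space M. t \<le> f x}
      = {x \<in> space M. 1 \<le> ennreal (exp (- \<theta> * t)) * ennreal (exp (\<theta> * f x))}"
    by (auto simp: ennreal_mult'[symmetric])
  also have "emeasure M \<dots>
      \<le> ennreal (exp (- \<theta> * t)) * (\<integral>\<^sup>+x. ennreal (exp (\<theta> * f x)) * indicator (space M) x \<partial>M)"
    using f by (intro nn_integral_Markov_inequality) auto
  also have "(\<integral>\<^sup>+x. ennreal (exp (\<theta> * f x)) * indicator (space M) x \<partial>M) = (\<integral>\<^sup>+x. ennreal (exp (\<theta> * f x)) \<partial>M)"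
    by (intro nn_integral_cong) auto
  finally show ?thesis .
qed

lemma gauss_PiM_linear_tail:
  assumes I: "finite I" and s: "0 < \<sigma>" and c: "0 < (\<Sum>k\<in>I. (c k)\<^sup>2)" and t: "0 \<le> t"
  shows "emeasure (PiM I (\<lambda>_. gauss \<sigma>)) {x \<in> space (PiM I (\<lambda>_. gauss \<sigma>)). t \<le> (\<Sum>k\<in>I. c k * x k)}
     \<le> ennreal (exp (- t\<^sup>2 / (2 * \<sigma>\<^sup>2 * (\<Sum>k\<in>I. (c k)\<^sup>2))))"
proof (cases "t = 0")
  case True
  interpret prob_space "PiM I (\<lambda>_. gauss \<sigma>)" by (intro prob_space_PiM prob_space_gauss s)
  show ?thesis using True by (simp add: emeasure_le_1)
next
  case False
  interpret product_prob_space "\<lambda>_. gauss \<sigma>" I by (intro product_prob_spaceI prob_space_gauss s)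
  let ?S = "\<Sum>k\<in>I. (c k)\<^sup>2"
  define \<theta> where "\<theta> = t / (\<sigma>\<^sup>2 * ?S)"
  have \<theta>: "\<theta> > 0" unfolding \<theta>_def using t False s c by simp
  have "emeasure (PiM I (\<lambda>_. gauss \<sigma>)) {x \<in> space (PiM I (\<lambda>_. gauss \<sigma>)). t \<le> (\<Sum>k\<in>I. c k * x k)}
      \<le> ennreal (exp (- \<theta> * t)) * (\<integral>\<^sup>+x. ennreal (exp (\<theta> * (\<Sum>k\<in>I. c k * x k))) \<partial>PiM I (\<lambda>_. gauss \<sigma>))"
    by (rule chernoff_bound[OF _ \<theta>])
      (auto intro!: borel_measurable_sum borel_measurable_times borel_measurable_component_gauss_PiM)
  also have "(\<integral>\<^sup>+x. ennreal (exp (\<theta> * (\<Sum>k\<in>I. c k * x k))) \<partial>PiM I (\<lambda>_. gauss \<sigma>))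
      = (\<integral>\<^sup>+x. (\<Prod>k\<in>I. ennreal (exp ((\<theta> * c k) * x k))) \<partial>PiM I (\<lambda>_. gauss \<sigma>))"
    using I by (intro nn_integral_cong) (simp add: prod_ennreal exp_sum sum_distrib_left mult.assoc)
  also have "\<dots> = (\<Prod>k\<in>I. \<integral>\<^sup>+y. ennreal (exp ((\<theta> * c k) * y)) \<partial>gauss \<sigma>)"
    by (rule product_nn_integral_prod[OF I]) (unfold borel_measurable_gauss, measurable)
  also have "\<dots> = ennreal (exp (\<Sum>k\<in>I. (\<theta> * c k)\<^sup>2 * \<sigma>\<^sup>2 / 2))"
    using I by (simp add: nn_integral_gauss_exp_mult[OF s] prod_ennreal exp_sum)
  also have "(\<Sum>k\<in>I. (\<theta> * c k)\<^sup>2 * \<sigma>\<^sup>2 / 2) = \<theta>\<^sup>2 * \<sigma>\<^sup>2 * ?S / 2"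
    by (simp add: sum_divide_distrib[symmetric] sum_distrib_left sum_distrib_right power_mult_distrib
        algebra_simps)
  also have "ennreal (exp (- \<theta> * t)) * ennreal (exp (\<theta>\<^sup>2 * \<sigma>\<^sup>2 * ?S / 2))
      = ennreal (exp (- t\<^sup>2 / (2 * \<sigma>\<^sup>2 * ?S)))"
    using s c by (simp add: ennreal_mult'[symmetric] exp_add[symmetric] \<theta>_def field_simps power2_eq_square)
  finally show ?thesis .
qed

lemma gauss_PiM_sum_square_tail:
  assumes I: "finite I" and s: "0 < \<sigma>"
  shows "emeasure (PiM I (\<lambda>_. gauss \<sigma>)) {x \<in> space (PiM I (\<lambda>_. gauss \<sigma>)). r \<le> (\<Sum>k\<in>I. (x k)\<^sup>2)}
     \<le> ennreal (sqrt 2 ^ card I * exp (- r / (4 * \<sigma>\<^sup>2)))"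
proof -
  interpret product_prob_space "\<lambda>_. gauss \<sigma>" I by (intro product_prob_spaceI prob_space_gauss s)
  define \<theta> where "\<theta> = 1 / (4 * \<sigma>\<^sup>2)"
  have \<theta>: "\<theta> > 0" unfolding \<theta>_def using s by simp
  have "emeasure (PiM I (\<lambda>_. gauss \<sigma>)) {x \<in> space (PiM I (\<lambda>_. gauss \<sigma>)). r \<le> (\<Sum>k\<in>I. (x k)\<^sup>2)}
      \<le> ennreal (exp (- \<theta> * r)) * (\<integral>\<^sup>+x. ennreal (exp (\<theta> * (\<Sum>k\<in>I. (x k)\<^sup>2))) \<partial>PiM I (\<lambda>_. gauss \<sigma>))"
    by (rule chernoff_bound[OF _ \<theta>])
      (auto intro!: borel_measurable_sum borel_measurable_power borel_measurable_component_gauss_PiM)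
  also have "(\<integral>\<^sup>+x. ennreal (exp (\<theta> * (\<Sum>k\<in>I. (x k)\<^sup>2))) \<partial>PiM I (\<lambda>_. gauss \<sigma>))
      = (\<integral>\<^sup>+x. (\<Prod>k\<in>I. ennreal (exp ((x k)\<^sup>2 / (4 * \<sigma>\<^sup>2)))) \<partial>PiM I (\<lambda>_. gauss \<sigma>))"
    using I by (intro nn_integral_cong) (simp add: prod_ennreal exp_sum sum_distrib_left \<theta>_def)
  also have "\<dots> = (\<Prod>k\<in>I. \<integral>\<^sup>+y. ennreal (exp (y\<^sup>2 / (4 * \<sigma>\<^sup>2))) \<partial>gauss \<sigma>)"
    by (rule product_nn_integral_prod[OF I]) (unfold borel_measurable_gauss, measurable)
  also have "\<dots> = ennreal (sqrt 2 ^ card I)"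
    by (simp add: nn_integral_gauss_exp_square[OF s] ennreal_power)
  also have "ennreal (exp (- \<theta> * r)) * ennreal (sqrt 2 ^ card I)
      = ennreal (sqrt 2 ^ card I * exp (- r / (4 * \<sigma>\<^sup>2)))"
    by (simp add: ennreal_mult'[symmetric] \<theta>_def mult.commute)
  finally show ?thesis .
qed

section \<open>The noise model\<close>

lemma prob_space_noise_space: "0 < \<sigma> \<Longrightarrow> prob_space (noise_space p \<sigma>)"
  unfolding noise_space_def by (intro prob_space_pair prob_space_PiM prob_space_gauss)

lemma borel_measurable_noise_mat_entry:
  "k \<in> {..<p} \<times> {..<p} \<Longrightarrow> (\<lambda>\<omega>. fst \<omega> k) \<in> borel_measurable (noise_space p \<sigma>)"
  unfolding noise_space_def
  by (rule measurable_compose[OF measurable_fst borel_measurable_component_gauss_PiM])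

lemma borel_measurable_noise_vec_entry:
  "i < p \<Longrightarrow> (\<lambda>\<omega>. snd \<omega> i) \<in> borel_measurable (noise_space p \<sigma>)"
  unfolding noise_space_def
  by (rule measurable_compose[OF measurable_snd borel_measurable_component_gauss_PiM]) simp

lemma emeasure_noise_space_mat_event:
  assumes s: "0 < \<sigma>" and A: "A \<in> sets (PiM ({..<p} \<times> {..<p}) (\<lambda>_. gauss \<sigma>))"
  shows "emeasure (noise_space p \<sigma>) (A \<times> space (PiM {..<p} (\<lambda>_. gauss \<sigma>)))
    = emeasure (PiM ({..<p} \<times> {..<p}) (\<lambda>_. gauss \<sigma>)) A"
proof -
  interpret prob_space "PiM {..<p} (\<lambda>_. gauss \<sigma>)" by (intro prob_space_PiM prob_space_gauss s)
  show ?thesis unfolding noise_space_def using A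
    by (simp add: emeasure_pair_measure_Times emeasure_space_1)
qed

lemma emeasure_noise_space_vec_event:
  assumes s: "0 < \<sigma>" and B: "B \<in> sets (PiM {..<p} (\<lambda>_. gauss \<sigma>))"
  shows "emeasure (noise_space p \<sigma>) (space (PiM ({..<p} \<times> {..<p}) (\<lambda>_. gauss \<sigma>)) \<times> B)
    = emeasure (PiM {..<p} (\<lambda>_. gauss \<sigma>)) B"
proof -
  interpret P1: prob_space "PiM ({..<p} \<times> {..<p}) (\<lambda>_. gauss \<sigma>)"
    by (intro prob_space_PiM prob_space_gauss s)
  interpret P2: prob_space "PiM {..<p} (\<lambda>_. gauss \<sigma>)" by (intro prob_space_PiM prob_space_gauss s)
  show ?thesis unfolding noise_space_def using B
    by (simp add: P2.emeasure_pair_measure_Times P1.emeasure_space_1)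
qed

lemma scalar_prod_noise_mat:
  assumes z: "z \<in> carrier_vec p" and w: "w \<in> carrier_vec p"
  shows "z \<bullet> (noise_mat p \<omega> *\<^sub>v w) = (\<Sum>k\<in>{..<p} \<times> {..<p}. (z $ fst k * w $ snd k) * fst \<omega> k)"
proof -
  have "z \<bullet> (noise_mat p \<omega> *\<^sub>v w) = (\<Sum>i<p. \<Sum>j<p. (z $ i * w $ j) * fst \<omega> (i, j))"
    unfolding noise_mat_def using z w
    by (simp add: scalar_prod_def sum_distrib_left atLeast0LessThan mult.commute mult.left_commute)
  then show ?thesis by (simp add: sum.cartesian_product split_beta)
qed

lemma sum_square_outer_product:
  assumes z: "z \<in> carrier_vec p" and w: "w \<in> carrier_vec p"
  shows "(\<Sum>k\<in>{..<p} \<times> {..<p}. (z $ fst k * w $ snd k)\<^sup>2) = (vnorm z)\<^sup>2 * (vnorm w)\<^sup>2"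
  using z w by (simp add: vnorm_square_eq_sum sum_product power_mult_distrib sum.cartesian_product
      split_beta)

text \<open>\<open>z \<bullet> N w\<close> is a centred Gaussian of variance \<open>\<sigma>\<^sup>2 \<parallel>z\<parallel>\<^sup>2 \<parallel>w\<parallel>\<^sup>2\<close>; \<open>K\<close> is any upper bound on
  \<open>\<parallel>z\<parallel>\<^sup>2 \<parallel>w\<parallel>\<^sup>2\<close>.\<close>

lemma noise_mat_bilinear_tail:
  assumes s: "0 < \<sigma>" and z: "z \<in> carrier_vec p" and w: "w \<in> carrier_vec p" and T: "0 < T"
    and K: "(vnorm z)\<^sup>2 * (vnorm w)\<^sup>2 \<le> K"
  defines "E \<equiv> {\<omega> \<in> space (noise_space p \<sigma>). T \<le> z \<bullet> (noise_mat p \<omega> *\<^sub>v w)}"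
  shows "E \<in> sets (noise_space p \<sigma>)" and "measure (noise_space p \<sigma>) E \<le> exp (- T\<^sup>2 / (2 * \<sigma>\<^sup>2 * K))"
proof -
  let ?I = "{..<p} \<times> {..<p}"
  let ?M1 = "PiM ?I (\<lambda>_. gauss \<sigma>)"
  define c where "c k = z $ fst k * w $ snd k" for k
  let ?A = "{x \<in> space ?M1. T \<le> (\<Sum>k\<in>?I. c k * x k)}"
  have "(\<lambda>x. \<Sum>k\<in>?I. c k * x k) \<in> borel_measurable ?M1"
    by (auto intro!: borel_measurable_sum borel_measurable_times borel_measurable_component_gauss_PiM)
  then have A: "?A \<in> sets ?M1" by (rule borel_measurable_iff_ge[THEN iffD1, rule_format])
  have E_eq: "E = ?A \<times> space (PiM {..<p} (\<lambda>_. gauss \<sigma>))"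
    unfolding E_def noise_space_def space_pair_measure using scalar_prod_noise_mat[OF z w]
    by (auto simp: c_def)
  show "E \<in> sets (noise_space p \<sigma>)"
    unfolding E_eq unfolding noise_space_def using A by (intro pair_measureI) auto
  interpret prob_space "noise_space p \<sigma>" by (rule prob_space_noise_space[OF s])
  have S: "(\<Sum>k\<in>?I. (c k)\<^sup>2) = (vnorm z)\<^sup>2 * (vnorm w)\<^sup>2"
    unfolding c_def by (rule sum_square_outer_product[OF z w])
  show "measure (noise_space p \<sigma>) E \<le> exp (- T\<^sup>2 / (2 * \<sigma>\<^sup>2 * K))"
  proof (cases "(\<Sum>k\<in>?I. (c k)\<^sup>2) = 0")
    case True
    then have "c k = 0" if "k \<in> ?I" for k
      using sum_nonneg_eq_0_iff[of ?I "\<lambda>k. (c k)\<^sup>2"] that by auto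
    then have "z \<bullet> (noise_mat p \<omega> *\<^sub>v w) = 0" for \<omega>
      unfolding scalar_prod_noise_mat[OF z w] c_def[symmetric] by (intro sum.neutral) simp
    then have "E = {}" using T unfolding E_def by auto
    then show ?thesis by simp
  next
    case False
    then have S_pos: "0 < (\<Sum>k\<in>?I. (c k)\<^sup>2)" by (metis less_eq_real_def sum_nonneg zero_le_power2)
    have "emeasure (noise_space p \<sigma>) E = emeasure ?M1 ?A"
      unfolding E_eq by (rule emeasure_noise_space_mat_event[OF s A])
    also have "\<dots> \<le> ennreal (exp (- T\<^sup>2 / (2 * \<sigma>\<^sup>2 * (\<Sum>k\<in>?I. (c k)\<^sup>2))))"
      using T by (intro gauss_PiM_linear_tail[OF _ s S_pos]) auto
    also have "\<dots> \<le> ennreal (exp (- T\<^sup>2 / (2 * \<sigma>\<^sup>2 * K)))"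
      using K S S_pos s by (intro ennreal_leI) (simp add: divide_left_mono mult_left_mono)
    finally show ?thesis by (simp add: emeasure_eq_measure ennreal_le_iff)
  qed
qed

lemma noise_vec_sum_square_tail:
  fixes r :: real and p :: nat
  assumes s: "0 < \<sigma>"
  defines "E \<equiv> {\<omega> \<in> space (noise_space p \<sigma>). r \<le> (\<Sum>i<p. (snd \<omega> i)\<^sup>2)}"
  shows "E \<in> sets (noise_space p \<sigma>)"
    and "measure (noise_space p \<sigma>) E \<le> sqrt 2 ^ p * exp (- r / (4 * \<sigma>\<^sup>2))"
proof -
  let ?M2 = "PiM {..<p} (\<lambda>_. gauss \<sigma>)"
  let ?B = "{x \<in> space ?M2. r \<le> (\<Sum>i<p. (x i)\<^sup>2)}"
  have "(\<lambda>x. \<Sum>i<p. (x i)\<^sup>2) \<in> borel_measurable ?M2"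
    by (auto intro!: borel_measurable_sum borel_measurable_power borel_measurable_component_gauss_PiM)
  then have B: "?B \<in> sets ?M2" by (rule borel_measurable_iff_ge[THEN iffD1, rule_format])
  have E_eq: "E = space (PiM ({..<p} \<times> {..<p}) (\<lambda>_. gauss \<sigma>)) \<times> ?B"
    unfolding E_def noise_space_def space_pair_measure by auto
  show "E \<in> sets (noise_space p \<sigma>)"
    unfolding E_eq unfolding noise_space_def using B by (intro pair_measureI) auto
  interpret prob_space "noise_space p \<sigma>" by (rule prob_space_noise_space[OF s])
  have "emeasure (noise_space p \<sigma>) E = emeasure ?M2 ?B"
    unfolding E_eq by (rule emeasure_noise_space_vec_event[OF s B])
  also have "\<dots> \<le> ennreal (sqrt 2 ^ p * exp (- r / (4 * \<sigma>\<^sup>2)))"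
    using gauss_PiM_sum_square_tail[OF _ s, of "{..<p}" r] by simp
  finally show "measure (noise_space p \<sigma>) E \<le> sqrt 2 ^ p * exp (- r / (4 * \<sigma>\<^sup>2))"
    by (simp add: emeasure_eq_measure ennreal_le_iff)
qed

lemma noise_vec_entry_tail:
  assumes s: "0 < \<sigma>" and i: "i < p" and \<epsilon>: "\<bar>\<epsilon>\<bar> = 1" and a: "0 \<le> a"
  defines "E \<equiv> {\<omega> \<in> space (noise_space p \<sigma>). a \<le> \<epsilon> * snd \<omega> i}"
  shows "E \<in> sets (noise_space p \<sigma>)" and "measure (noise_space p \<sigma>) E \<le> exp (- a\<^sup>2 / (2 * \<sigma>\<^sup>2))"
proof -
  let ?M2 = "PiM {..<p} (\<lambda>_. gauss \<sigma>)"
  define c where "c j = (if j = i then \<epsilon> else 0)" for j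
  have c: "(\<Sum>j<p. c j * x j) = \<epsilon> * x i" for x :: "nat \<Rightarrow> real"
  proof -
    have "(\<Sum>j<p. c j * x j) = (\<Sum>j<p. if j = i then \<epsilon> * x i else 0)"
      by (rule sum.cong) (auto simp: c_def)
    then show ?thesis using i by simp
  qed
  have c_square: "(\<Sum>j<p. (c j)\<^sup>2) = 1"
  proof -
    have "(\<Sum>j<p. (c j)\<^sup>2) = (\<Sum>j<p. if j = i then \<epsilon>\<^sup>2 else 0)"
      by (rule sum.cong) (auto simp: c_def)
    then show ?thesis using i \<epsilon> by (simp add: abs_square_eq_1)
  qed
  let ?B = "{x \<in> space ?M2. a \<le> (\<Sum>j<p. c j * x j)}"
  have "(\<lambda>x. \<Sum>j<p. c j * x j) \<in> borel_measurable ?M2"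
    by (auto intro!: borel_measurable_sum borel_measurable_times borel_measurable_component_gauss_PiM)
  then have B: "?B \<in> sets ?M2" by (rule borel_measurable_iff_ge[THEN iffD1, rule_format])
  have E_eq: "E = space (PiM ({..<p} \<times> {..<p}) (\<lambda>_. gauss \<sigma>)) \<times> ?B"
    unfolding E_def noise_space_def space_pair_measure c by auto
  show "E \<in> sets (noise_space p \<sigma>)"
    unfolding E_eq unfolding noise_space_def using B by (intro pair_measureI) auto
  interpret prob_space "noise_space p \<sigma>" by (rule prob_space_noise_space[OF s])
  have "emeasure (noise_space p \<sigma>) E = emeasure ?M2 ?B"
    unfolding E_eq by (rule emeasure_noise_space_vec_event[OF s B])
  also have "\<dots> \<le> ennreal (exp (- a\<^sup>2 / (2 * \<sigma>\<^sup>2 * (\<Sum>j<p. (c j)\<^sup>2))))"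
    using c_square a by (intro gauss_PiM_linear_tail[OF _ s]) auto
  finally show "measure (noise_space p \<sigma>) E \<le> exp (- a\<^sup>2 / (2 * \<sigma>\<^sup>2))"
    unfolding c_square by (simp add: emeasure_eq_measure ennreal_le_iff)
qed

lemma borel_measurable_solution_error:
  assumes A: "A \<in> carrier_mat p p" and b: "b \<in> carrier_vec p" and \<beta>: "\<beta> \<in> carrier_vec p"
  shows "(\<lambda>\<omega>. vnorm (minv (A + noise_mat p \<omega>) *\<^sub>v (b + noise_vec p \<omega>) - \<beta>))
    \<in> borel_measurable (noise_space p \<sigma>)"
proof -
  define F where "F \<omega> = A + noise_mat p \<omega>" for \<omega>
  have F: "F \<omega> \<in> carrier_mat p p" for \<omega> unfolding F_def noise_mat_def using A by auto
  have "(\<lambda>\<omega>. F \<omega> $$ (i,j)) \<in> borel_measurable (noise_space p \<sigma>)" if "i < p" "j < p" for i j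
    using A that borel_measurable_noise_mat_entry[of "(i, j)" p \<sigma>] by (simp add: F_def noise_mat_def)
  then have minv_entry: "(\<lambda>\<omega>. minv (F \<omega>) $$ (i, j)) \<in> borel_measurable (noise_space p \<sigma>)"
    if "i < p" "j < p" for i j
    by (rule borel_measurable_minv_entry[OF F _ that])
  have entry: "(minv (F \<omega>) *\<^sub>v (b + noise_vec p \<omega>)) $ i = (\<Sum>j<p. minv (F \<omega>) $$ (i, j) * (b $ j + snd \<omega> j))"
    if "i < p" for i \<omega>
  proof -
    have M: "minv (F \<omega>) \<in> carrier_mat p p" by (rule minv_carrier_mat[OF F])
    then have "(minv (F \<omega>) *\<^sub>v (b + noise_vec p \<omega>)) $ i
        = (\<Sum>j<p. row (minv (F \<omega>)) i $ j * (b + noise_vec p \<omega>) $ j)"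
      using b that by (simp add: scalar_prod_eq_sum noise_vec_def)
    also have "\<dots> = (\<Sum>j<p. minv (F \<omega>) $$ (i, j) * (b $ j + snd \<omega> j))"
      using M b that by (intro sum.cong) (auto simp: noise_vec_def)
    finally show ?thesis .
  qed
  have "vnorm (minv (F \<omega>) *\<^sub>v (b + noise_vec p \<omega>) - \<beta>)
     = sqrt (\<Sum>i<p. ((\<Sum>j<p. minv (F \<omega>) $$ (i, j) * (b $ j + snd \<omega> j)) - \<beta> $ i)\<^sup>2)" for \<omega>
    using minv_carrier_mat[OF F] \<beta> entry by (simp add: vnorm_def)
  moreover have "(\<lambda>\<omega>. sqrt (\<Sum>i<p. ((\<Sum>j<p. minv (F \<omega>) $$ (i, j) * (b $ j + snd \<omega> j)) - \<beta> $ i)\<^sup>2))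
       \<in> borel_measurable (noise_space p \<sigma>)"
    by (intro measurable_compose[OF _ borel_measurable_sqrt] borel_measurable_sum borel_measurable_power borel_measurable_diff
        borel_measurable_times borel_measurable_add borel_measurable_const minv_entry
        borel_measurable_noise_vec_entry) auto
  ultimately show ?thesis unfolding F_def by simp
qed

section \<open>Probability of the bad noise events\<close>

lemma int_net_union_bound_le:
  fixes L p :: real assumes L: "1 \<le> L" and p: "1 \<le> p"
  shows "exp (9 * p) * exp (9 * p) * exp (- (49/2) * p * L\<^sup>2) \<le> exp (- L) / 20"
proof -
  have LL: "L \<le> L\<^sup>2" using L by (simp add: power2_eq_square)
  have "p * (18 - 49/2 * L\<^sup>2) \<le> 1 * (18 - 49/2 * L\<^sup>2)"
    using LL L p by (intro mult_right_mono_neg) auto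
  then have "9 * p + 9 * p + (- (49/2) * p * L\<^sup>2) \<le> - L + (- (11/2))"
    using LL L by (simp add: algebra_simps)
  then have "exp (9 * p) * exp (9 * p) * exp (- (49/2) * p * L\<^sup>2) \<le> exp (- L) / exp (11/2)"
    by (simp add: exp_add[symmetric] exp_diff[symmetric])
  also have "\<dots> \<le> exp (- L) / 20"
  proof -
    have "20 \<le> 1 + 11/2 + (11/2::real)\<^sup>2 / 2" by (simp add: power2_eq_square)
    also have "\<dots> \<le> exp (11/2)" by (rule exp_lower_Taylor_quadratic) simp
    finally show ?thesis by (intro divide_left_mono) auto
  qed
  finally show ?thesis .
qed

lemma prob_noise_mat_large_on_int_net:
  fixes p :: nat
  assumes s: "0 < \<sigma>" and T: "0 < T"
  defines "E \<equiv> \<Union>z\<in>int_net p. \<Union>w\<in>int_net p.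
    {\<omega> \<in> space (noise_space p \<sigma>). T \<le> z \<bullet> (noise_mat p \<omega> *\<^sub>v w)}"
  shows "E \<in> sets (noise_space p \<sigma>)"
    and "measure (noise_space p \<sigma>) E \<le> exp (9 * real p) * exp (9 * real p)
      * exp (- T\<^sup>2 / (2 * \<sigma>\<^sup>2 * (25 * real p / 4)\<^sup>2))"
proof -
  interpret prob_space "noise_space p \<sigma>" by (rule prob_space_noise_space[OF s])
  let ?K = "(25 * real p / 4)\<^sup>2"
  let ?event = "\<lambda>z w. {\<omega> \<in> space (noise_space p \<sigma>). T \<le> z \<bullet> (noise_mat p \<omega> *\<^sub>v w)}"
  have K: "(vnorm z)\<^sup>2 * (vnorm w)\<^sup>2 \<le> ?K" if "z \<in> int_net p" "w \<in> int_net p" for z w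
    using that unfolding int_net_def power2_eq_square[of "25 * real p / 4"]
    by (intro mult_mono) auto
  note tail = noise_mat_bilinear_tail[OF s _ _ T K]
  have event: "?event z w \<in> events" if "z \<in> int_net p" "w \<in> int_net p" for z w
    using tail(1) that unfolding int_net_def by auto
  show "E \<in> events" unfolding E_def using event finite_int_net by (intro sets.finite_UN) auto
  have "measure (noise_space p \<sigma>) E \<le> (\<Sum>z\<in>int_net p. \<Sum>w\<in>int_net p. prob (?event z w))"
    unfolding E_def using event finite_int_net
    by (intro order.trans[OF measure_UNION_le] sum_mono measure_UNION_le sets.finite_UN) auto
  also have "\<dots> \<le> (\<Sum>z\<in>int_net p. \<Sum>w\<in>int_net p. exp (- T\<^sup>2 / (2 * \<sigma>\<^sup>2 * ?K)))"
    using tail(2) unfolding int_net_def by (intro sum_mono) auto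
  also have "\<dots> = real (card (int_net p)) * real (card (int_net p)) * exp (- T\<^sup>2 / (2 * \<sigma>\<^sup>2 * ?K))"
    by simp
  also have "\<dots> \<le> exp (9 * real p) * exp (9 * real p) * exp (- T\<^sup>2 / (2 * \<sigma>\<^sup>2 * ?K))"
    using card_int_net_le by (intro mult_right_mono mult_mono) auto
  finally show "measure (noise_space p \<sigma>) E \<le> exp (9 * real p) * exp (9 * real p)
      * exp (- T\<^sup>2 / (2 * \<sigma>\<^sup>2 * ?K))" .
qed

lemma prob_noise_mat_large_le:
  fixes p :: nat
  assumes s: "0 < \<sigma>" and p: "0 < p" and L: "1 \<le> L"
  defines "E \<equiv> \<Union>z\<in>int_net p. \<Union>w\<in>int_net p.
    {\<omega> \<in> space (noise_space p \<sigma>). 175 * real p * (\<sigma> * sqrt p * L) / 4 \<le> z \<bullet> (noise_mat p \<omega> *\<^sub>v w)}"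
  shows "E \<in> sets (noise_space p \<sigma>)" and "measure (noise_space p \<sigma>) E \<le> exp (- L) / 20"
proof -
  have "0 < 175 * real p * (\<sigma> * sqrt p * L) / 4" using s p L by simp
  note tail = prob_noise_mat_large_on_int_net[OF s this, where p = p, folded E_def]
  show "E \<in> sets (noise_space p \<sigma>)" by (rule tail(1))
  have exponent: "- (175 * real p * (\<sigma> * sqrt p * L) / 4)\<^sup>2 / (2 * \<sigma>\<^sup>2 * (25 * real p / 4)\<^sup>2)
      = - (49/2) * real p * L\<^sup>2"
    using s p by (simp add: power_mult_distrib field_simps)
  have "measure (noise_space p \<sigma>) E \<le> exp (9 * real p) * exp (9 * real p) * exp (- (49/2) * real p * L\<^sup>2)"
    using tail(2) unfolding exponent .
  also have "\<dots> \<le> exp (- L) / 20" using L p by (intro int_net_union_bound_le) auto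
  finally show "measure (noise_space p \<sigma>) E \<le> exp (- L) / 20" .
qed

lemma two_exp_coordinate_tail_le:
  fixes L :: real assumes L: "1 \<le> L"
  shows "2 * exp (- ((39/20)\<^sup>2 * L\<^sup>2 / 2)) \<le> 9/10 * exp (- L)"
proof -
  have "L \<le> L\<^sup>2" using L by (simp add: power2_eq_square)
  then have "- ((39/20)\<^sup>2 * L\<^sup>2 / 2) \<le> - L + (- (9/10))"
    using L unfolding power2_eq_square by linarith
  then have "2 * exp (- ((39/20)\<^sup>2 * L\<^sup>2 / 2)) \<le> 2 * exp (- L + (- (9/10)))" by simp
  also have "\<dots> = exp (- L) * (2 / exp (9/10))" by (simp only: exp_add exp_minus divide_inverse)
  also have "2 / exp (9/10) \<le> (9/10::real)"
  proof -
    have "20/9 \<le> 1 + 9/10 + (9/10::real)\<^sup>2 / 2" by (simp add: power2_eq_square)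
    also have "\<dots> \<le> exp (9/10)" by (rule exp_lower_Taylor_quadratic) simp
    finally show ?thesis by (simp add: field_simps)
  qed
  finally show ?thesis by simp
qed

lemma sqrt2_power_norm_tail_le:
  fixes L :: real assumes L: "1 \<le> L" and p: "2 \<le> p"
  shows "sqrt 2 ^ p * exp (- ((39/20)\<^sup>2 * (real p * L\<^sup>2) / 4)) \<le> 9/10 * exp (- L)"
proof -
  have "sqrt 2 \<le> exp (7/20)"
  proof -
    have "(2::real) \<le> (1 + 7/40 + (7/40)\<^sup>2 / 2) ^ 4" by (simp add: power2_eq_square power4_eq_xxxx)
    also have "\<dots> \<le> exp (7/40) ^ 4"
      by (intro power_mono exp_lower_Taylor_quadratic) (auto simp: power2_eq_square)
    also have "\<dots> = (exp (7/20))\<^sup>2" by (simp add: exp_of_nat_mult[symmetric])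
    finally show ?thesis by (simp add: real_le_lsqrt)
  qed
  then have "sqrt 2 ^ p \<le> exp (7/20) ^ p" by (intro power_mono) auto
  also have "\<dots> = exp (real p * (7/20))" by (rule exp_of_nat_mult[symmetric])
  finally have "sqrt 2 ^ p * exp (- ((39/20)\<^sup>2 * (real p * L\<^sup>2) / 4))
      \<le> exp (real p * (7/20)) * exp (- ((39/20)\<^sup>2 * (real p * L\<^sup>2) / 4))"
    by (intro mult_right_mono) auto
  also have "\<dots> = exp (real p * (7/20 - (39/20)\<^sup>2 / 4 * L\<^sup>2))"
    by (simp add: exp_add[symmetric] algebra_simps)
  also have "\<dots> \<le> exp (- L + (- (1/5)))"
  proof -
    have LL: "L \<le> L\<^sup>2" using L by (simp add: power2_eq_square)
    have "7/20 - (39/20)\<^sup>2 / 4 * L\<^sup>2 \<le> 0" using LL L unfolding power2_eq_square by linarith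
    then have "real p * (7/20 - (39/20)\<^sup>2 / 4 * L\<^sup>2) \<le> 2 * (7/20 - (39/20)\<^sup>2 / 4 * L\<^sup>2)"
      using p by (intro mult_right_mono_neg) auto
    also have "\<dots> = 2 * (7/20 - 1521/1600 * L\<^sup>2)" by (simp add: power2_eq_square)
    also have "\<dots> \<le> - L + (- (1/5))" using LL L by (simp add: field_simps)
    finally show ?thesis by simp
  qed
  also have "\<dots> = exp (- L) * (1 / exp (1/5))" by (simp only: exp_add exp_minus divide_inverse)
  also have "\<dots> \<le> exp (- L) * (9/10)"
  proof -
    have "10/9 \<le> 1 + (1/5::real)" by simp
    also have "\<dots> \<le> exp (1/5)" by (rule exp_ge_add_one_self)
    finally show ?thesis by (intro mult_left_mono) (auto simp: field_simps)
  qed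
  finally show ?thesis by simp
qed

lemma prob_noise_vec_large:
  fixes p :: nat
  assumes s: "0 < \<sigma>" and p: "0 < p" and L: "1 \<le> L"
  defines "E \<equiv> {\<omega> \<in> space (noise_space p \<sigma>). (39/20 * (\<sigma> * sqrt p * L))\<^sup>2 \<le> (\<Sum>i<p. (snd \<omega> i)\<^sup>2)}"
  shows "E \<in> sets (noise_space p \<sigma>)" and "measure (noise_space p \<sigma>) E \<le> 9/10 * exp (- L)"
proof -
  interpret prob_space "noise_space p \<sigma>" by (rule prob_space_noise_space[OF s])
  note tail = noise_vec_sum_square_tail[OF s, where r = "(39/20 * (\<sigma> * sqrt p * L))\<^sup>2" and p = p,
      folded E_def]
  show "E \<in> events" by (rule tail(1))
  show "prob E \<le> 9/10 * exp (- L)"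
  proof (cases "p = 1")
    case True
    let ?a = "39/20 * (\<sigma> * L)"
    let ?event = "\<lambda>\<epsilon>. {\<omega> \<in> space (noise_space p \<sigma>). ?a \<le> \<epsilon> * snd \<omega> 0}"
    have a: "0 \<le> ?a" using s L by simp
    note entry_tail = noise_vec_entry_tail[OF s p _ a]
    have cover: "E \<subseteq> ?event 1 \<union> ?event (- 1)"
    proof
      fix \<omega> assume "\<omega> \<in> E"
      then have "\<omega> \<in> space (noise_space p \<sigma>)" "?a\<^sup>2 \<le> (snd \<omega> 0)\<^sup>2" unfolding E_def True by auto
      then show "\<omega> \<in> ?event 1 \<union> ?event (- 1)"
        using a abs_le_square_iff[of ?a "snd \<omega> 0"] by (auto simp: abs_if split: if_splits)
    qed
    have events: "?event 1 \<in> events" "?event (- 1) \<in> events" by (rule entry_tail(1), simp)+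
    have "prob E \<le> prob (?event 1 \<union> ?event (- 1))"
      by (rule finite_measure_mono[OF cover sets.Un[OF events]])
    also have "\<dots> \<le> prob (?event 1) + prob (?event (- 1))"
      using events by (rule measure_Un_le)
    also have "\<dots> \<le> exp (- ?a\<^sup>2 / (2 * \<sigma>\<^sup>2)) + exp (- ?a\<^sup>2 / (2 * \<sigma>\<^sup>2))"
      by (intro add_mono) (rule entry_tail(2), simp)+
    also have "- ?a\<^sup>2 / (2 * \<sigma>\<^sup>2) = - ((39/20)\<^sup>2 * L\<^sup>2 / 2)"
      using s by (simp add: power_mult_distrib field_simps)
    also have "exp (- ((39/20)\<^sup>2 * L\<^sup>2 / 2)) + exp (- ((39/20)\<^sup>2 * L\<^sup>2 / 2))
        = 2 * exp (- ((39/20)\<^sup>2 * L\<^sup>2 / 2))" by simp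
    also have "2 * exp (- ((39/20)\<^sup>2 * L\<^sup>2 / 2)) \<le> 9/10 * exp (- L)"
      by (rule two_exp_coordinate_tail_le[OF L])
    finally show ?thesis .
  next
    case False
    have "prob E \<le> sqrt 2 ^ p * exp (- (39/20 * (\<sigma> * sqrt p * L))\<^sup>2 / (4 * \<sigma>\<^sup>2))"
      by (rule tail(2))
    also have "- (39/20 * (\<sigma> * sqrt p * L))\<^sup>2 / (4 * \<sigma>\<^sup>2) = - ((39/20)\<^sup>2 * (real p * L\<^sup>2) / 4)"
      using s by (simp add: power_mult_distrib field_simps)
    also have "sqrt 2 ^ p * exp (- ((39/20)\<^sup>2 * (real p * L\<^sup>2) / 4)) \<le> 9/10 * exp (- L)"
      using False p by (intro sqrt2_power_norm_tail_le[OF L]) auto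
    finally show ?thesis .
  qed
qed

lemma solution_error_le_of_small_noise:
  fixes A N :: "real mat"
  assumes A: "A \<in> carrier_mat p p" and N: "N \<in> carrier_mat p p"
    and b: "b \<in> carrier_vec p" and n: "n \<in> carrier_vec p" and \<beta>: "\<beta> \<in> carrier_vec p"
    and A\<beta>: "A *\<^sub>v \<beta> = b" and s: "0 < s"
    and lowerA: "\<And>x. x \<in> carrier_vec p \<Longrightarrow> s * vnorm x \<le> vnorm (A *\<^sub>v x)"
    and upperN: "\<And>x. x \<in> carrier_vec p \<Longrightarrow> vnorm (N *\<^sub>v x) \<le> 25 * Q * vnorm x"
    and small_n: "vnorm n \<le> 39/20 * Q"
    and \<eta>: "0 < \<eta>" "\<eta> < 1" and Q: "1000 * Q \<le> \<eta> * s"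
  shows "vnorm (minv (A + N) *\<^sub>v (b + n) - \<beta>) \<le> 2 * \<eta> * vnorm \<beta> + \<eta> / 500"
proof -
  let ?err = "vnorm (minv (A + N) *\<^sub>v (b + n) - \<beta>)"
  have "\<eta> * s \<le> s" using \<eta> s by simp
  then have s_gap: "39/40 * s \<le> s - 25 * Q" using Q by simp
  then have "(s - 25 * Q) * ?err \<le> vnorm n + 25 * Q * vnorm \<beta>"
    using s by (intro perturbed_solution_error[OF A N b n \<beta> A\<beta> lowerA upperN]) auto
  also have "\<dots> \<le> 39/20 * (\<eta> * s / 1000) + \<eta> * s / 40 * vnorm \<beta>"
    using small_n Q vnorm_nonneg[of \<beta>] by (intro add_mono mult_right_mono) auto
  also have "\<dots> \<le> 39/40 * s * (2 * \<eta> * vnorm \<beta> + \<eta> / 500)"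
    using s \<eta> vnorm_nonneg[of \<beta>] by (simp add: algebra_simps)
  also have "\<dots> \<le> (s - 25 * Q) * (2 * \<eta> * vnorm \<beta> + \<eta> / 500)"
    using s_gap \<eta> vnorm_nonneg[of \<beta>] by (intro mult_right_mono) auto
  finally show ?thesis using s s_gap by (simp add: mult_le_cancel_left_pos)
qed

lemma solution_error_le_outside_bad_events:
  fixes A :: "real mat" and p :: nat
  assumes A: "A \<in> carrier_mat p p" and b: "b \<in> carrier_vec p" and \<beta>: "\<beta> \<in> carrier_vec p"
    and A\<beta>: "A *\<^sub>v \<beta> = b" and s: "0 < s"
    and lowerA: "\<And>x. x \<in> carrier_vec p \<Longrightarrow> s * vnorm x \<le> vnorm (A *\<^sub>v x)"
    and \<eta>: "0 < \<eta>" "\<eta> < 1" and Q: "0 \<le> Q" "1000 * Q \<le> \<eta> * s" and p: "0 < p"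
    and net: "\<And>z w. z \<in> int_net p \<Longrightarrow> w \<in> int_net p \<Longrightarrow> z \<bullet> (noise_mat p \<omega> *\<^sub>v w) < 175 * real p * Q / 4"
    and vec: "(\<Sum>i<p. (snd \<omega> i)\<^sup>2) < (39/20 * Q)\<^sup>2"
  shows "vnorm (minv (A + noise_mat p \<omega>) *\<^sub>v (b + noise_vec p \<omega>) - \<beta>) \<le> 2 * \<eta> * vnorm \<beta> + \<eta> / 500"
proof (rule solution_error_le_of_small_noise[OF A _ b _ \<beta> A\<beta> s lowerA _ _ \<eta> Q(2)])
  have N: "noise_mat p \<omega> \<in> carrier_mat p p" by (simp add: noise_mat_def)
  then show "noise_mat p \<omega> \<in> carrier_mat p p" "noise_vec p \<omega> \<in> carrier_vec p"
    by (simp_all add: noise_vec_def)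
  have "bilinear_norm (noise_mat p \<omega>) \<le> 4 * (175 * real p * Q / 4) / (7 * real p)"
    using net by (intro bilinear_norm_le_int_net[OF N p] less_imp_le)
  also have "\<dots> = 25 * Q" using p by simp
  finally show "vnorm (noise_mat p \<omega> *\<^sub>v x) \<le> 25 * Q * vnorm x" if "x \<in> carrier_vec p" for x
    using vnorm_mult_mat_vec_le_bilinear_norm[OF N that] vnorm_nonneg[of x]
    by (meson mult_right_mono order_trans)
  have "(vnorm (noise_vec p \<omega>))\<^sup>2 < (39/20 * Q)\<^sup>2"
    using vec by (simp add: vnorm_square_eq_sum noise_vec_def)
  then show "vnorm (noise_vec p \<omega>) \<le> 39/20 * Q"
    using Q by (intro less_imp_le) (rule power2_less_imp_less, auto)
qed

text \<open>With \<open>Q = \<sigma> \<surd>p ln (1/\<nu>)\<close>, outside the two bad events the noise satisfies \<open>\<parallel>N\<parallel> \<le> 25 Q\<close>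
  and \<open>\<parallel>n\<parallel> \<le> 39/20 Q\<close>, and the gap assumption reads \<open>1000 Q \<le> \<eta> \<sigma>\<^sub>m\<^sub>i\<^sub>n(A)\<close>.\<close>

lemma least_squares_noise_bound:
  fixes X :: "real mat" and y :: "real vec"
  assumes X: "X \<in> carrier_mat n p" and y: "y \<in> carrier_vec n" and p: "0 < p"
    and \<eta>: "0 < \<eta>" "\<eta> < 1" and \<nu>: "0 < \<nu>" "\<nu> < 1 / exp 1" and \<sigma>: "0 < \<sigma>"
    and gap: "sigma_min (transpose_mat X * X) \<ge> 2 * 500 / \<eta> * \<sigma> * sqrt (real p) * ln (1 / \<nu>)"
  defines "A \<equiv> transpose_mat X * X" and "b \<equiv> transpose_mat X *\<^sub>v y"
    and "\<beta> \<equiv> minv (transpose_mat X * X) *\<^sub>v (transpose_mat X *\<^sub>v y)"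
  shows "measure (noise_space p \<sigma>) {\<omega> \<in> space (noise_space p \<sigma>).
      vnorm (minv (A + noise_mat p \<omega>) *\<^sub>v (b + noise_vec p \<omega>) - \<beta>) \<le> 2 * \<eta> * vnorm \<beta> + \<eta> / 500}
    \<ge> 1 - \<nu>"
proof -
  define L where "L = ln (1 / \<nu>)"
  define Q where "Q = \<sigma> * sqrt (real p) * L"
  define s where "s = sigma_min A"
  define good where "good = {\<omega> \<in> space (noise_space p \<sigma>).
    vnorm (minv (A + noise_mat p \<omega>) *\<^sub>v (b + noise_vec p \<omega>) - \<beta>) \<le> 2 * \<eta> * vnorm \<beta> + \<eta> / 500}"
  interpret prob_space "noise_space p \<sigma>" by (rule prob_space_noise_space[OF \<sigma>])
  have A: "A \<in> carrier_mat p p" and b: "b \<in> carrier_vec p" using X y by (auto simp: A_def b_def)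
  have "exp 1 < 1 / \<nu>" using \<nu> by (simp add: field_simps)
  then have L: "1 \<le> L" unfolding L_def using \<nu> by (metis ln_exp ln_less_cancel_iff exp_gt_zero less_trans less_imp_le)
  have Q: "0 \<le> Q" "1000 * Q \<le> \<eta> * s"
    using gap \<eta> \<sigma> L unfolding s_def A_def Q_def L_def by (simp_all add: field_simps)
  have "0 < Q" unfolding Q_def using \<sigma> p L by simp
  then have "0 < \<eta> * s" using Q(2) by linarith
  then have s: "0 < s" using \<eta>(1) by (rule zero_less_mult_pos)
  have lowerA: "s * vnorm x \<le> vnorm (A *\<^sub>v x)" if "x \<in> carrier_vec p" for x
    unfolding s_def by (rule sigma_min_mult_vnorm_le[OF A p that])
  have \<beta>: "\<beta> \<in> carrier_vec p" and A\<beta>: "A *\<^sub>v \<beta> = b"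
    using solve_minv[OF A b s lowerA] unfolding \<beta>_def A_def b_def by auto
  have good: "good \<in> events"
    using borel_measurable_solution_error[OF A b \<beta>] unfolding good_def
    by (rule borel_measurable_iff_le[THEN iffD1, rule_format])
  note mat_tail = prob_noise_mat_large_le[OF \<sigma> p L] and vec_tail = prob_noise_vec_large[OF \<sigma> p L]
  note outside = solution_error_le_outside_bad_events[OF A b \<beta> A\<beta> s lowerA \<eta> Q p]
  have "space (noise_space p \<sigma>) - good \<subseteq>
      (\<Union>z\<in>int_net p. \<Union>w\<in>int_net p. {\<omega> \<in> space (noise_space p \<sigma>).
         175 * real p * (\<sigma> * sqrt p * L) / 4 \<le> z \<bullet> (noise_mat p \<omega> *\<^sub>v w)})
      \<union> {\<omega> \<in> space (noise_space p \<sigma>). (39/20 * (\<sigma> * sqrt p * L))\<^sup>2 \<le> (\<Sum>i<p. (snd \<omega> i)\<^sup>2)}"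
    (is "_ \<subseteq> ?bad_mat \<union> ?bad_vec")
    using outside unfolding good_def Q_def by (force simp: not_le)
  then have "prob (space (noise_space p \<sigma>) - good) \<le> prob (?bad_mat \<union> ?bad_vec)"
    by (rule finite_measure_mono[OF _ sets.Un[OF mat_tail(1) vec_tail(1)]])
  then have "1 - prob good \<le> prob (?bad_mat \<union> ?bad_vec)" using prob_compl[OF good] by simp
  also have "\<dots> \<le> prob ?bad_mat + prob ?bad_vec"
    using mat_tail(1) vec_tail(1) by (rule measure_Un_le)
  also have "\<dots> \<le> exp (- L) / 20 + 9/10 * exp (- L)"
    using mat_tail(2) vec_tail(2) by (rule add_mono)
  also have "\<dots> \<le> \<nu>" using \<nu> unfolding L_def by (simp add: ln_div)
  finally show ?thesis unfolding good_def by simp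
qed

theorem theoremC1:
  "\<exists>C::real. C \<ge> 1 \<and>
    (\<forall>(n::nat) (p::nat) (X::real mat) (y::real vec) (\<eta>::real) (\<nu>::real) (\<sigma>::real).
      X \<in> carrier_mat n p \<longrightarrow> y \<in> carrier_vec n \<longrightarrow>
      invertible_mat (transpose_mat X * X) \<longrightarrow>
      0 < \<eta> \<longrightarrow> \<eta> < 1 \<longrightarrow> 0 < \<nu> \<longrightarrow> \<nu> < 1 / exp 1 \<longrightarrow> 0 < \<sigma> \<longrightarrow>
      sigma_min (transpose_mat X * X) \<ge> 2 * C / \<eta> * \<sigma> * sqrt (real p) * ln (1 / \<nu>) \<longrightarrow>
      (let A = transpose_mat X * X; b = transpose_mat X *\<^sub>v y;
           \<beta>hat = minv A *\<^sub>v b in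
       measure (noise_space p \<sigma>)
         {\<omega> \<in> space (noise_space p \<sigma>).
            vnorm (minv (A + noise_mat p \<omega>) *\<^sub>v (b + noise_vec p \<omega>) - \<beta>hat)
              \<le> 2 * \<eta> * vnorm \<beta>hat + \<eta> / C}
       \<ge> 1 - \<nu>))"
proof (intro exI[of _ "500::real"] conjI allI impI)
  fix n p :: nat and X :: "real mat" and y :: "real vec" and \<eta> \<nu> \<sigma> :: real
  assume X: "X \<in> carrier_mat n p" and y: "y \<in> carrier_vec n"
    and \<eta>: "0 < \<eta>" "\<eta> < 1" and \<nu>: "0 < \<nu>" "\<nu> < 1 / exp 1" and \<sigma>: "0 < \<sigma>"
    and gap: "sigma_min (transpose_mat X * X) \<ge> 2 * 500 / \<eta> * \<sigma> * sqrt (real p) * ln (1 / \<nu>)"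
  show "let A = transpose_mat X * X; b = transpose_mat X *\<^sub>v y; \<beta>hat = minv A *\<^sub>v b in
       measure (noise_space p \<sigma>) {\<omega> \<in> space (noise_space p \<sigma>).
         vnorm (minv (A + noise_mat p \<omega>) *\<^sub>v (b + noise_vec p \<omega>) - \<beta>hat) \<le> 2 * \<eta> * vnorm \<beta>hat + \<eta> / 500}
       \<ge> 1 - \<nu>"
  proof (cases "p = 0")
    case True
    interpret prob_space "noise_space p \<sigma>" by (rule prob_space_noise_space[OF \<sigma>])
    have "minv (transpose_mat X * X + noise_mat p \<omega>) \<in> carrier_mat 0 0" for \<omega>
      using X True by (intro minv_carrier_mat) (auto simp: noise_mat_def)
    then show ?thesis
      using X True \<eta> \<nu> minv_carrier_mat[of "transpose_mat X * X" 0] vnorm_nonneg prob_space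
      by (simp add: Let_def vnorm_def)
  next
    case False
    then show ?thesis
      using least_squares_noise_bound[OF X y _ \<eta> \<nu> \<sigma> gap] unfolding Let_def by simp
  qed
qed simp

end
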